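(* Let $\mathcal C$ be a category, $n\ge1$, and let $f:A\to B$ be a degeneracy map in $Z^n(\mathcal C)$. Then $f$ factors, uniquely up to isomorphism, as a simple degeneracy map followed by a parallel degeneracy map.
   Context: Notation: for $n\ge 0$, $[n]$ denotes $\{0,\dots,n-1\}$; $\Delta_+$ is the category of these finite total orders and order-preserving maps. For monotone $\varphi:[n]\to[m]$ define $\hat\varphi:[m+1]\to[n+1]$ by $\hat\varphi(i)=\min(\{j\in[n]:\varphi(j)\ge i\}\cup\{n\})$. Zigzags: in a category $\mathcal C$, a zigzag $X$ of length $n$ is a diagram $X(r_0)\xrightarrow{x_0} X(s_0)\xleftarrow{x'_0} X(r_1)\to\cdots\xrightarrow{x_{n-1}} X(s_{n-1})\xleftarrow{x'_{n-1}} X(r_n)$. A zigzag map $f:X\to Y$ (lengths $n$, $m$) consists of a monotone $f_s:[n]\to[m]$, regular slices $f(r_i):X(r_{\hat{f_s}(i)})\to Y(r_i)$ for $0\le i\le m$ and singular slices $f(s_j):X(s_j)\to Y(s_{f_s(j)})$ for $0\le j<n$, such that for each $0\le i<m$: if $f_s^{-1}(i)\neq\emptyset$ with least element $p$, greatest $q$, then $f(s_p)\circ x_p=y_i\circ f(r_i)$, $f(s_q)\circ x'_q=y'_i\circ f(r_{i+1})$, $f(s_j)\circ x'_j=f(s_{j+1})\circ x_{j+1}$ for $p\le j<q$; if $f_s^{-1}(i)=\emptyset$ then $y_i\circ f(r_i)=y'_i\circ f(r_{i+1})$. Composition: $(g\circ f)_s=g_s\circ f_s$, $(g\circ f)(s_j)=g(s_{f_s(j)})\circ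 f(s_j)$, $(g\circ f)(r_i)=g(r_i)\circ f(r_{\hat{g_s}(i)})$. This gives a category $Z(\mathcal C)$; $Z^0(\mathcal C)=\mathcal C$, $Z^n(\mathcal C)=Z(Z^{n-1}(\mathcal C))$. $\pi:Z(\mathcal C)\to\Delta_+$ sends a zigzag of length $n$ to $[n]$ and $f$ to $f_s$; $f$ is $\pi$-vertical if $\pi(f)$ is an identity; $f:x\to y$ is $\pi$-cocartesian if for every $h:x\to y'$ and $u:\pi(y)\to\pi(y')$ with $u\circ\pi(f)=\pi(h)$ there is a unique $v:y\to y'$ with $v\circ f=h$, $\pi(v)=u$. Degeneracy maps in $Z^n(\mathcal C)$ (by induction on $n$): in $Z^0(\mathcal C)$ the isomorphisms; for $n\ge1$ the maps generated under composition by simple degeneracy maps (the $\pi$-cocartesian maps $f$ with $\pi(f)$ a monomorphism of $\Delta_+$) and parallel degeneracy maps (the $\pi$-vertical maps whose regular and singular slices are all degeneracy maps in $Z^{n-1}(\mathcal C)$). *)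

theory Defs
  imports Main
begin

record ('o, 'a) cat =
  Ob  :: "'o set"
  Ar  :: "'a set"
  Dom :: "'a \<Rightarrow> 'o"
  Cod :: "'a \<Rightarrow> 'o"
  Cmp :: "'a \<Rightarrow> 'a \<Rightarrow> 'a"   (* Cmp C g f = g o f *)
  Idt :: "'o \<Rightarrow> 'a"

definition is_category :: "('o, 'a) cat \<Rightarrow> bool" where
  "is_category C \<longleftrightarrow>
     (\<forall>f\<in>Ar C. Dom C f \<in> Ob C \<and> Cod C f \<in> Ob C) \<and>
     (\<forall>a\<in>Ob C. Idt C a \<in> Ar C \<and> Dom C (Idt C a) = a \<and> Cod C (Idt C a) = a) \<and>
     (\<forall>f\<in>Ar C. \<forall>g\<in>Ar C. Cod C f = Dom C g \<longrightarrow>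
        Cmp C g f \<in> Ar C \<and> Dom C (Cmp C g f) = Dom C f \<and> Cod C (Cmp C g f) = Cod C g) \<and>
     (\<forall>f\<in>Ar C. Cmp C (Idt C (Cod C f)) f = f \<and> Cmp C f (Idt C (Dom C f)) = f) \<and>
     (\<forall>f\<in>Ar C. \<forall>g\<in>Ar C. \<forall>h\<in>Ar C. Cod C f = Dom C g \<longrightarrow> Cod C g = Dom C h \<longrightarrow>
        Cmp C h (Cmp C g f) = Cmp C (Cmp C h g) f)"

definition is_iso :: "('o, 'a) cat \<Rightarrow> 'a \<Rightarrow> bool" where
  "is_iso C f \<longleftrightarrow> f \<in> Ar C \<and>
     (\<exists>g\<in>Ar C. Dom C g = Cod C f \<and> Cod C g = Dom C f \<and>
        Cmp C g f = Idt C (Dom C f) \<and> Cmp C f g = Idt C (Cod C f))"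

section \<open>A universal type for objects and arrows of all iterated zigzag categories\<close>

text \<open>A zigzag object  OZig rs ss xs xs'  of length n has regular objects rs (length n+1),
  singular objects ss (length n), forward maps xs (x_i : r_i -> s_i) and backward maps
  xs' (x'_i : r_(i+1) -> s_i).  A zigzag map  AZig X Y fs rsl ssl  has source X, target Y,
  singular map f_s given as the list fs = [f_s(0),...,f_s(n-1)], regular slices rsl
  (length m+1) and singular slices ssl (length n).\<close>

datatype ('o, 'm) zob =
    OBase (obase: 'o)
  | OZig (zregs: "('o, 'm) zob list") (zsings: "('o, 'm) zob list")
         (zfwd: "('o, 'm) zar list") (zbwd: "('o, 'm) zar list")
and ('o, 'm) zar =
    ABase (abase: 'm)
  | AZig (zsrc: "('o, 'm) zob") (ztgt: "('o, 'm) zob") (zfs: "nat list")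
         (zrsl: "('o, 'm) zar list") (zssl: "('o, 'm) zar list")

type_synonym ('o, 'm) zcat = "(('o, 'm) zob, ('o, 'm) zar) cat"

definition zlen :: "('o, 'm) zob \<Rightarrow> nat" where
  "zlen X = length (zsings X)"

text \<open>Monotone maps [n] -> [m] of Delta_+, represented as lists.\<close>
definition mono_map :: "nat \<Rightarrow> nat \<Rightarrow> nat list \<Rightarrow> bool" where
  "mono_map n m fs \<longleftrightarrow> length fs = n \<and> (\<forall>j<n. fs ! j < m) \<and>
     (\<forall>i j. i \<le> j \<longrightarrow> j < n \<longrightarrow> fs ! i \<le> fs ! j)"

definition hat :: "nat list \<Rightarrow> nat \<Rightarrow> nat" where
  "hat fs i = Min ({j. j < length fs \<and> i \<le> fs ! j} \<union> {length fs})"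

definition lift0 :: "('o, 'm) cat \<Rightarrow> ('o, 'm) zcat" where
  "lift0 C = \<lparr> Ob = OBase ` Ob C, Ar = ABase ` Ar C,
     Dom = (\<lambda>a. OBase (Dom C (abase a))), Cod = (\<lambda>a. OBase (Cod C (abase a))),
     Cmp = (\<lambda>g f. ABase (Cmp C (abase g) (abase f))),
     Idt = (\<lambda>x. ABase (Idt C (obase x))) \<rparr>"

definition is_zig :: "('o, 'm) zcat \<Rightarrow> ('o, 'm) zob \<Rightarrow> bool" where
  "is_zig D X \<longleftrightarrow> (\<exists>rs ss xs xs'. X = OZig rs ss xs xs' \<and>
     length rs = Suc (length ss) \<and> length xs = length ss \<and> length xs' = length ss \<and>
     set rs \<subseteq> Ob D \<and> set ss \<subseteq> Ob D \<and>
     (\<forall>i<length ss. xs ! i \<in> Ar D \<and> Dom D (xs ! i) = rs ! i \<and> Cod D (xs ! i) = ss ! i \<and>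
        xs' ! i \<in> Ar D \<and> Dom D (xs' ! i) = rs ! Suc i \<and> Cod D (xs' ! i) = ss ! i))"

definition is_zmap :: "('o, 'm) zcat \<Rightarrow> ('o, 'm) zar \<Rightarrow> bool" where
  "is_zmap D F \<longleftrightarrow> (\<exists>X Y fs rsl ssl. F = AZig X Y fs rsl ssl \<and>
     is_zig D X \<and> is_zig D Y \<and>
     mono_map (zlen X) (zlen Y) fs \<and>
     length rsl = Suc (zlen Y) \<and> length ssl = zlen X \<and>
     (\<forall>i\<le>zlen Y. rsl ! i \<in> Ar D \<and> Dom D (rsl ! i) = zregs X ! hat fs i \<and>
        Cod D (rsl ! i) = zregs Y ! i) \<and>
     (\<forall>j<zlen X. ssl ! j \<in> Ar D \<and> Dom D (ssl ! j) = zsings X ! j \<and>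
        Cod D (ssl ! j) = zsings Y ! (fs ! j)) \<and>
     (\<forall>i<zlen Y.
        (if {j. j < zlen X \<and> fs ! j = i} \<noteq> {} then
           (let p = Min {j. j < zlen X \<and> fs ! j = i}; q = Max {j. j < zlen X \<and> fs ! j = i} in
             Cmp D (ssl ! p) (zfwd X ! p) = Cmp D (zfwd Y ! i) (rsl ! i) \<and>
             Cmp D (ssl ! q) (zbwd X ! q) = Cmp D (zbwd Y ! i) (rsl ! Suc i) \<and>
             (\<forall>j. p \<le> j \<longrightarrow> j < q \<longrightarrow>
                Cmp D (ssl ! j) (zbwd X ! j) = Cmp D (ssl ! Suc j) (zfwd X ! Suc j)))
         else Cmp D (zfwd Y ! i) (rsl ! i) = Cmp D (zbwd Y ! i) (rsl ! Suc i))))"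

definition Zcat :: "('o, 'm) zcat \<Rightarrow> ('o, 'm) zcat" where
  "Zcat D = \<lparr> Ob = {X. is_zig D X}, Ar = {F. is_zmap D F},
     Dom = zsrc, Cod = ztgt,
     Cmp = (\<lambda>G F. AZig (zsrc F) (ztgt G) (map (\<lambda>j. zfs G ! j) (zfs F))
              (map (\<lambda>i. Cmp D (zrsl G ! i) (zrsl F ! hat (zfs G) i)) [0..<Suc (zlen (ztgt G))])
              (map (\<lambda>j. Cmp D (zssl G ! (zfs F ! j)) (zssl F ! j)) [0..<length (zfs F)])),
     Idt = (\<lambda>X. AZig X X [0..<zlen X] (map (Idt D) (zregs X)) (map (Idt D) (zsings X))) \<rparr>"

primrec Zn :: "('o, 'm) cat \<Rightarrow> nat \<Rightarrow> ('o, 'm) zcat" where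
  "Zn C 0 = lift0 C"
| "Zn C (Suc n) = Zcat (Zn C n)"

definition pi_vertical :: "('o, 'm) zar \<Rightarrow> bool" where
  "pi_vertical F \<longleftrightarrow> zlen (zsrc F) = zlen (ztgt F) \<and> zfs F = [0..<zlen (zsrc F)]"

definition pi_cocartesian :: "('o, 'm) zcat \<Rightarrow> ('o, 'm) zar \<Rightarrow> bool" where
  "pi_cocartesian E f \<longleftrightarrow> f \<in> Ar E \<and>
     (\<forall>h\<in>Ar E. Dom E h = Dom E f \<longrightarrow>
        (\<forall>u. mono_map (zlen (Cod E f)) (zlen (Cod E h)) u \<and> map (\<lambda>j. u ! j) (zfs f) = zfs h \<longrightarrow>
           (\<exists>!v. v \<in> Ar E \<and> Dom E v = Cod E f \<and> Cod E v = Cod E h \<and>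
                 Cmp E v f = h \<and> zfs v = u)))"

inductive_set comp_closure :: "('o, 'a) cat \<Rightarrow> 'a set \<Rightarrow> 'a set"
  for C :: "('o, 'a) cat" and G :: "'a set" where
  gen: "f \<in> G \<Longrightarrow> f \<in> comp_closure C G"
| cmp: "f \<in> comp_closure C G \<Longrightarrow> g \<in> comp_closure C G \<Longrightarrow> Cod C f = Dom C g
          \<Longrightarrow> Cmp C g f \<in> comp_closure C G"

text \<open>Simple degeneracy: pi-cocartesian with pi(f) a monomorphism (injective) of Delta_+.\<close>
definition simple_degen_in :: "('o, 'm) zcat \<Rightarrow> ('o, 'm) zar \<Rightarrow> bool" where
  "simple_degen_in E f \<longleftrightarrow> pi_cocartesian E f \<and> distinct (zfs f)"

text \<open>Parallel degeneracy: pi-vertical with all slices degeneracy maps one level down (set S).\<close>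
definition parallel_degen_in :: "('o, 'm) zcat \<Rightarrow> ('o, 'm) zar set \<Rightarrow> ('o, 'm) zar \<Rightarrow> bool" where
  "parallel_degen_in E S f \<longleftrightarrow> f \<in> Ar E \<and> pi_vertical f \<and>
     set (zrsl f) \<subseteq> S \<and> set (zssl f) \<subseteq> S"

primrec degen :: "('o, 'm) cat \<Rightarrow> nat \<Rightarrow> ('o, 'm) zar set" where
  "degen C 0 = {f. is_iso (Zn C 0) f}"
| "degen C (Suc n) = comp_closure (Zn C (Suc n))
     ({f. simple_degen_in (Zn C (Suc n)) f} \<union> {f. parallel_degen_in (Zn C (Suc n)) (degen C n) f})"

definition simple_degen :: "('o, 'm) cat \<Rightarrow> nat \<Rightarrow> ('o, 'm) zar \<Rightarrow> bool" where
  "simple_degen C n f \<longleftrightarrow> simple_degen_in (Zn C n) f"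

definition parallel_degen :: "('o, 'm) cat \<Rightarrow> nat \<Rightarrow> ('o, 'm) zar \<Rightarrow> bool" where
  "parallel_degen C n f \<longleftrightarrow> parallel_degen_in (Zn C n) (degen C (n - 1)) f"

end

theory Submission
  imports Defs
begin

text \<open>
  Up to a vertical isomorphism, a simple degeneracy is the canonical cocartesian lift of its
  source along an injection of \<open>\<Delta>\<^sub>+\<close>, which inserts identity cospans at the positions outside
  the image. A parallel degeneracy followed by such a lift can therefore be rewritten as a lift
  followed by a parallel degeneracy: the singular slices at the inserted positions are forced to
  be regular slices of the original map. Since both kinds of maps are closed under composition,
  induction over composites gives the factorization. For uniqueness, if \<open>p \<circ> s = p' \<circ> s'\<close> with
  \<open>p, p'\<close> vertical, then \<open>s\<close> and \<open>s'\<close> are cocartesian over the same map of \<open>\<Delta>\<^sub>+\<close>, so the comparison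
  \<open>\<theta>\<close> with \<open>\<theta> \<circ> s = s'\<close> is a vertical isomorphism, and \<open>p' \<circ> \<theta> = p\<close> by the uniqueness part of
  the cocartesian property.
\<close>

section \<open>Categories\<close>

definition in_hom :: "('o, 'a) cat \<Rightarrow> 'o \<Rightarrow> 'o \<Rightarrow> 'a \<Rightarrow> bool" where
  "in_hom D a b f \<longleftrightarrow> f \<in> Ar D \<and> Dom D f = a \<and> Cod D f = b"

locale category =
  fixes D :: "('o, 'a) cat"
  assumes is_category: "is_category D"
begin

lemma Dom_Cod_in_Ob: "f \<in> Ar D \<Longrightarrow> Dom D f \<in> Ob D \<and> Cod D f \<in> Ob D"
  using is_category unfolding is_category_def by blast

lemma Idt_arr: "a \<in> Ob D \<Longrightarrow> Idt D a \<in> Ar D \<and> Dom D (Idt D a) = a \<and> Cod D (Idt D a) = a"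
  using is_category unfolding is_category_def by blast

lemma Cmp_arr: "f \<in> Ar D \<Longrightarrow> g \<in> Ar D \<Longrightarrow> Cod D f = Dom D g \<Longrightarrow>
    Cmp D g f \<in> Ar D \<and> Dom D (Cmp D g f) = Dom D f \<and> Cod D (Cmp D g f) = Cod D g"
  using is_category unfolding is_category_def by blast

lemma Cmp_Idt: "f \<in> Ar D \<Longrightarrow> Cmp D (Idt D (Cod D f)) f = f \<and> Cmp D f (Idt D (Dom D f)) = f"
  using is_category unfolding is_category_def by blast

lemma Cmp_assoc: "f \<in> Ar D \<Longrightarrow> g \<in> Ar D \<Longrightarrow> h \<in> Ar D \<Longrightarrow>
    Cod D f = Dom D g \<Longrightarrow> Cod D g = Dom D h \<Longrightarrow> Cmp D h (Cmp D g f) = Cmp D (Cmp D h g) f"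
  using is_category unfolding is_category_def by blast

lemma in_hom_objs: "in_hom D a b f \<Longrightarrow> a \<in> Ob D \<and> b \<in> Ob D"
  using Dom_Cod_in_Ob unfolding in_hom_def by metis

lemma in_hom_id: "a \<in> Ob D \<Longrightarrow> in_hom D a a (Idt D a)"
  using Idt_arr unfolding in_hom_def by metis

lemma in_hom_comp: "in_hom D a b f \<Longrightarrow> in_hom D b c g \<Longrightarrow> in_hom D a c (Cmp D g f)"
  using Cmp_arr unfolding in_hom_def by metis

lemma comp_id_left: "in_hom D a b f \<Longrightarrow> Cmp D (Idt D b) f = f"
  using Cmp_Idt unfolding in_hom_def by metis

lemma comp_id_right: "in_hom D a b f \<Longrightarrow> Cmp D f (Idt D a) = f"
  using Cmp_Idt unfolding in_hom_def by metis

lemma comp_assoc: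
  "in_hom D a b f \<Longrightarrow> in_hom D b c g \<Longrightarrow> in_hom D c d h \<Longrightarrow>
   Cmp D h (Cmp D g f) = Cmp D (Cmp D h g) f"
  using Cmp_assoc unfolding in_hom_def by metis

lemma is_isoI:
  assumes "in_hom D a b f" "in_hom D b a g"
    and "Cmp D g f = Idt D a" "Cmp D f g = Idt D b"
  shows "is_iso D f"
  using assms unfolding is_iso_def in_hom_def by auto

lemma is_isoE:
  assumes "is_iso D f"
  obtains g where "in_hom D (Dom D f) (Cod D f) f" "in_hom D (Cod D f) (Dom D f) g"
    "Cmp D g f = Idt D (Dom D f)" "Cmp D f g = Idt D (Cod D f)"
  using assms unfolding is_iso_def in_hom_def by auto

lemma iso_id: "a \<in> Ob D \<Longrightarrow> is_iso D (Idt D a)"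
  using is_isoI[OF in_hom_id in_hom_id] comp_id_left[OF in_hom_id] by metis

lemma iso_comp:
  assumes f: "is_iso D f" and g: "is_iso D g" and fg: "Cod D f = Dom D g"
  shows "is_iso D (Cmp D g f)"
proof -
  obtain f' where f: "in_hom D (Dom D f) (Cod D f) f" "in_hom D (Cod D f) (Dom D f) f'"
    and f'f: "Cmp D f' f = Idt D (Dom D f)" and ff': "Cmp D f f' = Idt D (Cod D f)"
    using f by (rule is_isoE)
  obtain g' where g: "in_hom D (Cod D f) (Cod D g) g" "in_hom D (Cod D g) (Cod D f) g'"
    and g'g: "Cmp D g' g = Idt D (Cod D f)" and gg': "Cmp D g g' = Idt D (Cod D g)"
    by (rule is_isoE[OF g, unfolded fg[symmetric]])
  have gf: "in_hom D (Dom D f) (Cod D g) (Cmp D g f)"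
    and f'g': "in_hom D (Cod D g) (Dom D f) (Cmp D f' g')"
    using in_hom_comp f g by blast+
  have "Cmp D (Cmp D f' g') (Cmp D g f) = Cmp D f' (Cmp D (Cmp D g' g) f)"
    using comp_assoc[OF gf g(2) f(2)] comp_assoc[OF f(1) g(1) g(2)] by simp
  also have "\<dots> = Idt D (Dom D f)" using f'f g'g comp_id_left[OF f(1)] by simp
  finally have left: "Cmp D (Cmp D f' g') (Cmp D g f) = Idt D (Dom D f)" .
  have "Cmp D (Cmp D g f) (Cmp D f' g') = Cmp D g (Cmp D (Cmp D f f') g')"
    using comp_assoc[OF f'g' f(1) g(1)] comp_assoc[OF g(2) f(2) f(1)] by simp
  also have "\<dots> = Idt D (Cod D g)" using ff' gg' comp_id_left[OF g(2)] by simp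
  finally have right: "Cmp D (Cmp D g f) (Cmp D f' g') = Idt D (Cod D g)" .
  show ?thesis using is_isoI[OF gf f'g' left right] .
qed

end

lemma is_category_lift0:
  assumes "is_category C"
  shows "is_category (lift0 C)"
  using assms unfolding is_category_def lift0_def by (auto simp: image_iff)

section \<open>Monotone maps of \<open>\<Delta>\<^sub>+\<close> and their adjoints\<close>

lemma mono_map_length: "mono_map n m \<phi> \<Longrightarrow> length \<phi> = n"
  unfolding mono_map_def by auto

lemma mono_map_less: "mono_map n m \<phi> \<Longrightarrow> j < n \<Longrightarrow> \<phi> ! j < m"
  unfolding mono_map_def by auto

lemma mono_mapD: "mono_map n m \<phi> \<Longrightarrow> i \<le> j \<Longrightarrow> j < n \<Longrightarrow> \<phi> ! i \<le> \<phi> ! j"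
  unfolding mono_map_def by auto

lemma mono_map_id: "mono_map n n [0..<n]"
  unfolding mono_map_def by auto

lemma mono_map_comp:
  "mono_map n m \<phi> \<Longrightarrow> mono_map m k \<gamma> \<Longrightarrow> mono_map n k (map (\<lambda>j. \<gamma> ! j) \<phi>)"
  unfolding mono_map_def by auto

lemma map_nth_upt_mono_map: "mono_map n m \<phi> \<Longrightarrow> map (\<lambda>j. [0..<m] ! j) \<phi> = \<phi>"
  by (rule nth_equalityI) (use mono_map_less[of n m \<phi>] mono_map_length[of n m \<phi>] in auto)

lemma hat_le_length: "hat \<phi> i \<le> length \<phi>"
  unfolding hat_def by (rule Min_le) auto

lemma hat_le: "mono_map n m \<phi> \<Longrightarrow> hat \<phi> i \<le> n"
  using hat_le_length mono_map_length by metis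

text \<open>\<open>hat \<phi>\<close> is left adjoint to \<open>\<phi>\<close>.\<close>
lemma hat_le_iff:
  assumes \<phi>: "mono_map n m \<phi>" and j: "j < n"
  shows "hat \<phi> i \<le> j \<longleftrightarrow> i \<le> \<phi> ! j"
proof
  let ?S = "{j. j < length \<phi> \<and> i \<le> \<phi> ! j} \<union> {length \<phi>}"
  have n: "length \<phi> = n" using \<phi> by (rule mono_map_length)
  assume le: "hat \<phi> i \<le> j"
  have "hat \<phi> i \<in> ?S" unfolding hat_def by (intro Min_in) auto
  then show "i \<le> \<phi> ! j"
  proof
    assume "hat \<phi> i \<in> {j. j < length \<phi> \<and> i \<le> \<phi> ! j}"
    then have "i \<le> \<phi> ! hat \<phi> i" by auto
    also have "\<dots> \<le> \<phi> ! j" using mono_mapD[OF \<phi> le j] .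
    finally show ?thesis .
  next
    assume "hat \<phi> i \<in> {length \<phi>}"
    then show ?thesis using le n j by auto
  qed
next
  assume "i \<le> \<phi> ! j"
  then have "j \<in> {j. j < length \<phi> \<and> i \<le> \<phi> ! j}" using j mono_map_length[OF \<phi>] by auto
  then show "hat \<phi> i \<le> j" unfolding hat_def by (intro Min_le) auto
qed

lemma hat_eqI:
  assumes \<phi>: "mono_map n m \<phi>" and "a \<le> n" and a: "\<And>j. j < n \<Longrightarrow> a \<le> j \<longleftrightarrow> i \<le> \<phi> ! j"
  shows "hat \<phi> i = a"
proof (rule antisym)
  show "hat \<phi> i \<le> a"
  proof (cases "a < n")
    case True
    then show ?thesis using a[OF True] hat_le_iff[OF \<phi> True] by simp
  qed (use \<open>a \<le> n\<close> hat_le[OF \<phi>, of i] in simp)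
  show "a \<le> hat \<phi> i"
  proof (cases "hat \<phi> i < n")
    case True
    then show ?thesis using a[OF True] hat_le_iff[OF \<phi> True, of i] by simp
  qed (use \<open>a \<le> n\<close> hat_le[OF \<phi>, of i] in simp)
qed

lemma hat_mono:
  assumes \<phi>: "mono_map n m \<phi>" and "i \<le> i'"
  shows "hat \<phi> i \<le> hat \<phi> i'"
proof (cases "hat \<phi> i' < n")
  case True
  then have "i' \<le> \<phi> ! hat \<phi> i'" using hat_le_iff[OF \<phi> True, of i'] by simp
  then show ?thesis using hat_le_iff[OF \<phi> True, of i] \<open>i \<le> i'\<close> by simp
qed (use hat_le[OF \<phi>, of i] in simp)

lemma hat_nth_le: "mono_map n m \<phi> \<Longrightarrow> j < n \<Longrightarrow> hat \<phi> (\<phi> ! j) \<le> j"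
  using hat_le_iff by blast

lemma Suc_le_hat_Suc_nth: "mono_map n m \<phi> \<Longrightarrow> j < n \<Longrightarrow> Suc j \<le> hat \<phi> (Suc (\<phi> ! j))"
  using hat_le_iff[of n m \<phi> j "Suc (\<phi> ! j)"] by auto

lemma hat_id: "i \<le> n \<Longrightarrow> hat [0..<n] i = i"
  by (rule hat_eqI[OF mono_map_id]) auto

lemma hat_comp:
  assumes \<phi>: "mono_map n m \<phi>" and \<gamma>: "mono_map m k \<gamma>"
  shows "hat (map (\<lambda>j. \<gamma> ! j) \<phi>) i = hat \<phi> (hat \<gamma> i)"
proof (rule hat_eqI[OF mono_map_comp[OF \<phi> \<gamma>] hat_le[OF \<phi>]])
  fix j assume j: "j < n"
  have "hat \<phi> (hat \<gamma> i) \<le> j \<longleftrightarrow> hat \<gamma> i \<le> \<phi> ! j" by (rule hat_le_iff[OF \<phi> j])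
  also have "\<dots> \<longleftrightarrow> i \<le> \<gamma> ! (\<phi> ! j)" by (rule hat_le_iff[OF \<gamma> mono_map_less[OF \<phi> j]])
  finally show "hat \<phi> (hat \<gamma> i) \<le> j \<longleftrightarrow> i \<le> map (\<lambda>j. \<gamma> ! j) \<phi> ! j"
    using j mono_map_length[OF \<phi>] by simp
qed

lemma fiber_eq_hat_interval:
  assumes "mono_map n m \<phi>"
  shows "{j. j < n \<and> \<phi> ! j = i} = {hat \<phi> i..<hat \<phi> (Suc i)}"
proof -
  have "j < n \<and> \<phi> ! j = i \<longleftrightarrow> hat \<phi> i \<le> j \<and> j < hat \<phi> (Suc i)" for j
  proof (cases "j < n")
    case True
    then show ?thesis using hat_le_iff[OF assms True, of i] hat_le_iff[OF assms True, of "Suc i"]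
      by auto
  next
    case False
    then show ?thesis using hat_le[OF assms, of "Suc i"] by auto
  qed
  then show ?thesis by (simp add: set_eq_iff)
qed

lemma Min_atLeastLessThan: "a < (b::nat) \<Longrightarrow> Min {a..<b} = a"
  by (rule Min_eqI) auto

lemma Max_atLeastLessThan: "a < (b::nat) \<Longrightarrow> Max {a..<b} = b - 1"
  by (rule Max_eqI) auto

text \<open>The compatibility conditions of a zigzag map, indexed by the fibres of \<open>\<phi>\<close>, which are the
  intervals \<open>{hat \<phi> i..<hat \<phi> (Suc i)}\<close>.\<close>
definition fiber_conditions ::
  "nat \<Rightarrow> nat list \<Rightarrow> (nat \<Rightarrow> nat \<Rightarrow> bool) \<Rightarrow> (nat \<Rightarrow> nat \<Rightarrow> bool) \<Rightarrow> (nat \<Rightarrow> bool) \<Rightarrow> (nat \<Rightarrow> bool) \<Rightarrow> bool"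
where
  "fiber_conditions m \<phi> A B C E \<longleftrightarrow> (\<forall>i<m. if hat \<phi> i < hat \<phi> (Suc i)
     then A (hat \<phi> i) i \<and> B (hat \<phi> (Suc i) - 1) i \<and> (\<forall>j. hat \<phi> i \<le> j \<longrightarrow> j < hat \<phi> (Suc i) - 1 \<longrightarrow> C j)
     else E i)"

lemma fiber_conditions_iff_Min_Max:
  assumes \<phi>: "mono_map n m \<phi>"
  shows "(\<forall>i<m. if {j. j < n \<and> \<phi> ! j = i} \<noteq> {} then
           (let p = Min {j. j < n \<and> \<phi> ! j = i}; q = Max {j. j < n \<and> \<phi> ! j = i} in
             A p i \<and> B q i \<and> (\<forall>j. p \<le> j \<longrightarrow> j < q \<longrightarrow> C j))
         else E i) \<longleftrightarrow> fiber_conditions m \<phi> A B C E"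
  unfolding fiber_conditions_def
  by (intro all_cong1 imp_cong refl if_cong)
    (simp_all add: fiber_eq_hat_interval[OF \<phi>] Min_atLeastLessThan Max_atLeastLessThan Let_def)

text \<open>Pointwise, \<open>hat \<phi> (\<phi> ! j) = j\<close> says that \<open>j\<close> is the least element of its fibre,
  \<open>hat \<phi> (Suc (\<phi> ! j)) = Suc j\<close> that it is the greatest, and \<open>hat \<phi> i = hat \<phi> (Suc i)\<close> that the
  fibre over \<open>i\<close> is empty.\<close>
lemma fiber_conditionsD:
  assumes \<phi>: "mono_map n m \<phi>" and F: "fiber_conditions m \<phi> A B C E"
  shows "\<And>j. j < n \<Longrightarrow> hat \<phi> (\<phi> ! j) = j \<Longrightarrow> A j (\<phi> ! j)"
    and "\<And>j. j < n \<Longrightarrow> hat \<phi> (Suc (\<phi> ! j)) = Suc j \<Longrightarrow> B j (\<phi> ! j)"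
    and "\<And>j. Suc j < n \<Longrightarrow> \<phi> ! j = \<phi> ! Suc j \<Longrightarrow> C j"
    and "\<And>i. i < m \<Longrightarrow> hat \<phi> i = hat \<phi> (Suc i) \<Longrightarrow> E i"
proof -
  have mem: "j < n \<and> \<phi> ! j = i \<longleftrightarrow> hat \<phi> i \<le> j \<and> j < hat \<phi> (Suc i)" for i j
    using fiber_eq_hat_interval[OF \<phi>, of i] by (simp add: set_eq_iff)
  have F': "A (hat \<phi> (\<phi> ! j)) (\<phi> ! j) \<and> B (hat \<phi> (Suc (\<phi> ! j)) - 1) (\<phi> ! j) \<and>
      (\<forall>k. hat \<phi> (\<phi> ! j) \<le> k \<longrightarrow> k < hat \<phi> (Suc (\<phi> ! j)) - 1 \<longrightarrow> C k)" if "j < n" for j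
    using F mono_map_less[OF \<phi> that] mem[of j "\<phi> ! j"] that
    unfolding fiber_conditions_def by (auto split: if_splits)
  show "A j (\<phi> ! j)" if "j < n" "hat \<phi> (\<phi> ! j) = j" for j using F' that by metis
  show "B j (\<phi> ! j)" if "j < n" "hat \<phi> (Suc (\<phi> ! j)) = Suc j" for j using F' that
    by (metis diff_Suc_1)
  show "C j" if "Suc j < n" "\<phi> ! j = \<phi> ! Suc j" for j
    using F'[of j] mem[of j "\<phi> ! j"] mem[of "Suc j" "\<phi> ! j"] that by auto
  show "E i" if "i < m" "hat \<phi> i = hat \<phi> (Suc i)" for i using F that
    unfolding fiber_conditions_def by auto
qed

lemma fiber_conditionsI:
  assumes \<phi>: "mono_map n m \<phi>"
    and A: "\<And>j. j < n \<Longrightarrow> hat \<phi> (\<phi> ! j) = j \<Longrightarrow> A j (\<phi> ! j)"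
    and B: "\<And>j. j < n \<Longrightarrow> hat \<phi> (Suc (\<phi> ! j)) = Suc j \<Longrightarrow> B j (\<phi> ! j)"
    and C: "\<And>j. Suc j < n \<Longrightarrow> \<phi> ! j = \<phi> ! Suc j \<Longrightarrow> C j"
    and E: "\<And>i. i < m \<Longrightarrow> hat \<phi> i = hat \<phi> (Suc i) \<Longrightarrow> E i"
  shows "fiber_conditions m \<phi> A B C E"
  unfolding fiber_conditions_def
proof (intro allI impI)
  fix i assume i: "i < m"
  have mem: "j < n \<and> \<phi> ! j = i \<longleftrightarrow> hat \<phi> i \<le> j \<and> j < hat \<phi> (Suc i)" for j
    using fiber_eq_hat_interval[OF \<phi>, of i] by (simp add: set_eq_iff)
  show "if hat \<phi> i < hat \<phi> (Suc i)
    then A (hat \<phi> i) i \<and> B (hat \<phi> (Suc i) - 1) i \<and> (\<forall>j. hat \<phi> i \<le> j \<longrightarrow> j < hat \<phi> (Suc i) - 1 \<longrightarrow> C j)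
    else E i"
  proof (cases "hat \<phi> i < hat \<phi> (Suc i)")
    case True
    define p q where "p = hat \<phi> i" and "q = hat \<phi> (Suc i) - 1"
    have p: "p < n" "\<phi> ! p = i" and q: "q < n" "\<phi> ! q = i"
      using mem[of p] mem[of q] True unfolding p_def q_def by auto
    have "hat \<phi> (\<phi> ! p) = p" "hat \<phi> (Suc (\<phi> ! q)) = Suc q"
      using p q True unfolding p_def q_def by auto
    then have "A p i" "B q i" using A B p q by metis+
    moreover have "C j" if "p \<le> j" "j < q" for j
      using C mem[of j] mem[of "Suc j"] that unfolding p_def q_def by auto
    ultimately show ?thesis using True unfolding p_def q_def by auto
  next
    case False
    then show ?thesis using E i hat_mono[OF \<phi>, of i "Suc i"] by auto
  qed
qed

definition zigzag_map ::
  "('o, 'm) zcat \<Rightarrow> ('o, 'm) zob \<Rightarrow> ('o, 'm) zob \<Rightarrow> nat list \<Rightarrow> ('o, 'm) zar list \<Rightarrow> ('o, 'm) zar list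
    \<Rightarrow> bool"
where
  "zigzag_map D X Y \<phi> R S \<longleftrightarrow> is_zig D X \<and> is_zig D Y \<and> mono_map (zlen X) (zlen Y) \<phi> \<and>
    length R = Suc (zlen Y) \<and> length S = zlen X \<and>
    (\<forall>i\<le>zlen Y. in_hom D (zregs X ! hat \<phi> i) (zregs Y ! i) (R ! i)) \<and>
    (\<forall>j<zlen X. in_hom D (zsings X ! j) (zsings Y ! (\<phi> ! j)) (S ! j)) \<and>
    (\<forall>j<zlen X. hat \<phi> (\<phi> ! j) = j \<longrightarrow>
       Cmp D (S ! j) (zfwd X ! j) = Cmp D (zfwd Y ! (\<phi> ! j)) (R ! (\<phi> ! j))) \<and>
    (\<forall>j<zlen X. hat \<phi> (Suc (\<phi> ! j)) = Suc j \<longrightarrow>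
       Cmp D (S ! j) (zbwd X ! j) = Cmp D (zbwd Y ! (\<phi> ! j)) (R ! Suc (\<phi> ! j))) \<and>
    (\<forall>j. Suc j < zlen X \<longrightarrow> \<phi> ! j = \<phi> ! Suc j \<longrightarrow>
       Cmp D (S ! j) (zbwd X ! j) = Cmp D (S ! Suc j) (zfwd X ! Suc j)) \<and>
    (\<forall>i<zlen Y. hat \<phi> i = hat \<phi> (Suc i) \<longrightarrow>
       Cmp D (zfwd Y ! i) (R ! i) = Cmp D (zbwd Y ! i) (R ! Suc i))"

lemma fiber_conditions_iff:
  assumes "mono_map n m \<phi>"
  shows "fiber_conditions m \<phi> A B C E \<longleftrightarrow>
    (\<forall>j<n. hat \<phi> (\<phi> ! j) = j \<longrightarrow> A j (\<phi> ! j)) \<and>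
    (\<forall>j<n. hat \<phi> (Suc (\<phi> ! j)) = Suc j \<longrightarrow> B j (\<phi> ! j)) \<and>
    (\<forall>j. Suc j < n \<longrightarrow> \<phi> ! j = \<phi> ! Suc j \<longrightarrow> C j) \<and>
    (\<forall>i<m. hat \<phi> i = hat \<phi> (Suc i) \<longrightarrow> E i)"
proof
  assume F: "fiber_conditions m \<phi> A B C E"
  show "(\<forall>j<n. hat \<phi> (\<phi> ! j) = j \<longrightarrow> A j (\<phi> ! j)) \<and>
    (\<forall>j<n. hat \<phi> (Suc (\<phi> ! j)) = Suc j \<longrightarrow> B j (\<phi> ! j)) \<and>
    (\<forall>j. Suc j < n \<longrightarrow> \<phi> ! j = \<phi> ! Suc j \<longrightarrow> C j) \<and>
    (\<forall>i<m. hat \<phi> i = hat \<phi> (Suc i) \<longrightarrow> E i)"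
    by (intro conjI allI impI) (rule fiber_conditionsD[OF assms F]; assumption)+
qed (rule fiber_conditionsI[OF assms]; blast)

lemma is_zmap_iff: "is_zmap D (AZig X Y \<phi> R S) \<longleftrightarrow> zigzag_map D X Y \<phi> R S"
proof (cases "mono_map (zlen X) (zlen Y) \<phi>")
  case True
  have "(\<exists>X' Y' \<phi>' R' S'. AZig X Y \<phi> R S = AZig X' Y' \<phi>' R' S' \<and> P X' Y' \<phi>' R' S') \<longleftrightarrow> P X Y \<phi> R S"
    for P by simp
  then show ?thesis unfolding is_zmap_def zigzag_map_def in_hom_def
    by (simp only: fiber_conditions_iff_Min_Max[OF True] fiber_conditions_iff[OF True])
qed (simp add: is_zmap_def zigzag_map_def)

lemma is_zmapD:
  assumes "is_zmap D F"
  shows "F = AZig (zsrc F) (ztgt F) (zfs F) (zrsl F) (zssl F)"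
    and "zigzag_map D (zsrc F) (ztgt F) (zfs F) (zrsl F) (zssl F)"
proof -
  obtain X Y \<phi> R S where F: "F = AZig X Y \<phi> R S" using assms unfolding is_zmap_def by blast
  then show "F = AZig (zsrc F) (ztgt F) (zfs F) (zrsl F) (zssl F)" by simp
  show "zigzag_map D (zsrc F) (ztgt F) (zfs F) (zrsl F) (zssl F)"
    using assms is_zmap_iff[of D X Y \<phi> R S] unfolding F by simp
qed

lemma zigzag_mapD:
  assumes "zigzag_map D X Y \<phi> R S"
  shows "is_zig D X" "is_zig D Y" "mono_map (zlen X) (zlen Y) \<phi>"
    "length R = Suc (zlen Y)" "length S = zlen X"
    "\<And>i. i \<le> zlen Y \<Longrightarrow> in_hom D (zregs X ! hat \<phi> i) (zregs Y ! i) (R ! i)"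
    "\<And>j. j < zlen X \<Longrightarrow> in_hom D (zsings X ! j) (zsings Y ! (\<phi> ! j)) (S ! j)"
    "\<And>j. j < zlen X \<Longrightarrow> hat \<phi> (\<phi> ! j) = j \<Longrightarrow>
       Cmp D (S ! j) (zfwd X ! j) = Cmp D (zfwd Y ! (\<phi> ! j)) (R ! (\<phi> ! j))"
    "\<And>j. j < zlen X \<Longrightarrow> hat \<phi> (Suc (\<phi> ! j)) = Suc j \<Longrightarrow>
       Cmp D (S ! j) (zbwd X ! j) = Cmp D (zbwd Y ! (\<phi> ! j)) (R ! Suc (\<phi> ! j))"
    "\<And>j. Suc j < zlen X \<Longrightarrow> \<phi> ! j = \<phi> ! Suc j \<Longrightarrow>
       Cmp D (S ! j) (zbwd X ! j) = Cmp D (S ! Suc j) (zfwd X ! Suc j)"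
    "\<And>i. i < zlen Y \<Longrightarrow> hat \<phi> i = hat \<phi> (Suc i) \<Longrightarrow>
       Cmp D (zfwd Y ! i) (R ! i) = Cmp D (zbwd Y ! i) (R ! Suc i)"
  using assms unfolding zigzag_map_def by auto

lemma zigzag_mapI:
  assumes "is_zig D X" "is_zig D Y" "mono_map (zlen X) (zlen Y) \<phi>"
    "length R = Suc (zlen Y)" "length S = zlen X"
    "\<And>i. i \<le> zlen Y \<Longrightarrow> in_hom D (zregs X ! hat \<phi> i) (zregs Y ! i) (R ! i)"
    "\<And>j. j < zlen X \<Longrightarrow> in_hom D (zsings X ! j) (zsings Y ! (\<phi> ! j)) (S ! j)"
    "\<And>j. j < zlen X \<Longrightarrow> hat \<phi> (\<phi> ! j) = j \<Longrightarrow>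
       Cmp D (S ! j) (zfwd X ! j) = Cmp D (zfwd Y ! (\<phi> ! j)) (R ! (\<phi> ! j))"
    "\<And>j. j < zlen X \<Longrightarrow> hat \<phi> (Suc (\<phi> ! j)) = Suc j \<Longrightarrow>
       Cmp D (S ! j) (zbwd X ! j) = Cmp D (zbwd Y ! (\<phi> ! j)) (R ! Suc (\<phi> ! j))"
    "\<And>j. Suc j < zlen X \<Longrightarrow> \<phi> ! j = \<phi> ! Suc j \<Longrightarrow>
       Cmp D (S ! j) (zbwd X ! j) = Cmp D (S ! Suc j) (zfwd X ! Suc j)"
    "\<And>i. i < zlen Y \<Longrightarrow> hat \<phi> i = hat \<phi> (Suc i) \<Longrightarrow>
       Cmp D (zfwd Y ! i) (R ! i) = Cmp D (zbwd Y ! i) (R ! Suc i)"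
  shows "zigzag_map D X Y \<phi> R S"
  using assms unfolding zigzag_map_def by blast

lemma Zcat_simps:
  "Ob (Zcat D) = {X. is_zig D X}" "Ar (Zcat D) = {F. is_zmap D F}"
  "Dom (Zcat D) = zsrc" "Cod (Zcat D) = ztgt"
  "Cmp (Zcat D) G F = AZig (zsrc F) (ztgt G) (map (\<lambda>j. zfs G ! j) (zfs F))
     (map (\<lambda>i. Cmp D (zrsl G ! i) (zrsl F ! hat (zfs G) i)) [0..<Suc (zlen (ztgt G))])
     (map (\<lambda>j. Cmp D (zssl G ! (zfs F ! j)) (zssl F ! j)) [0..<length (zfs F)])"
  "Idt (Zcat D) X = AZig X X [0..<zlen X] (map (Idt D) (zregs X)) (map (Idt D) (zsings X))"
  unfolding Zcat_def by simp_all

lemma Cmp_Zcat_simps: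
  "zsrc (Cmp (Zcat D) g f) = zsrc f" "ztgt (Cmp (Zcat D) g f) = ztgt g"
  "zfs (Cmp (Zcat D) g f) = map (\<lambda>j. zfs g ! j) (zfs f)"
  "zsrc (Idt (Zcat D) X) = X" "ztgt (Idt (Zcat D) X) = X" "zfs (Idt (Zcat D) X) = [0..<zlen X]"
  by (simp_all add: Zcat_simps)

lemma Cmp_Zcat_nth:
  "length (zrsl (Cmp (Zcat D) G F)) = Suc (zlen (ztgt G))"
  "length (zssl (Cmp (Zcat D) G F)) = length (zfs F)"
  "i \<le> zlen (ztgt G) \<Longrightarrow> zrsl (Cmp (Zcat D) G F) ! i = Cmp D (zrsl G ! i) (zrsl F ! hat (zfs G) i)"
  "j < length (zfs F) \<Longrightarrow> zssl (Cmp (Zcat D) G F) ! j = Cmp D (zssl G ! (zfs F ! j)) (zssl F ! j)"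
  by (simp_all add: Zcat_simps del: upt_Suc add: nth_map_upt less_Suc_eq_le)

lemma Cmp_Zcat_eqI:
  assumes "zsrc F = zsrc F'" "ztgt G = ztgt G'"
    and "zfs (Cmp (Zcat D) G F) = zfs (Cmp (Zcat D) G' F')"
    and "zrsl (Cmp (Zcat D) G F) = zrsl (Cmp (Zcat D) G' F')"
    and "zssl (Cmp (Zcat D) G F) = zssl (Cmp (Zcat D) G' F')"
  shows "Cmp (Zcat D) G F = Cmp (Zcat D) G' F'"
  using assms unfolding Zcat_simps by simp

section \<open>The zigzag category is a category\<close>

locale zigzag_category = category D for D :: "('o, 'm) zcat"
begin

lemma is_zigD:
  assumes "is_zig D X"
  shows "X = OZig (zregs X) (zsings X) (zfwd X) (zbwd X)"
    "length (zregs X) = Suc (zlen X)" "length (zsings X) = zlen X"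
    "length (zfwd X) = zlen X" "length (zbwd X) = zlen X"
    "\<And>i. i \<le> zlen X \<Longrightarrow> zregs X ! i \<in> Ob D" "\<And>j. j < zlen X \<Longrightarrow> zsings X ! j \<in> Ob D"
    "\<And>i. i < zlen X \<Longrightarrow> in_hom D (zregs X ! i) (zsings X ! i) (zfwd X ! i)"
    "\<And>i. i < zlen X \<Longrightarrow> in_hom D (zregs X ! Suc i) (zsings X ! i) (zbwd X ! i)"
proof -
  obtain rs ss xs xs' where X: "X = OZig rs ss xs xs'" and len: "length rs = Suc (length ss)"
    "length xs = length ss" "length xs' = length ss" and ob: "set rs \<subseteq> Ob D" "set ss \<subseteq> Ob D"
    and ar: "\<forall>i<length ss. in_hom D (rs ! i) (ss ! i) (xs ! i) \<and> in_hom D (rs ! Suc i) (ss ! i)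
      (xs' ! i)"
    using assms unfolding is_zig_def in_hom_def by blast
  show "X = OZig (zregs X) (zsings X) (zfwd X) (zbwd X)"
    "length (zregs X) = Suc (zlen X)" "length (zsings X) = zlen X"
    "length (zfwd X) = zlen X" "length (zbwd X) = zlen X"
    "\<And>i. i < zlen X \<Longrightarrow> in_hom D (zregs X ! i) (zsings X ! i) (zfwd X ! i)"
    "\<And>i. i < zlen X \<Longrightarrow> in_hom D (zregs X ! Suc i) (zsings X ! i) (zbwd X ! i)"
    using X len ar by (simp_all add: zlen_def)
  show "\<And>i. i \<le> zlen X \<Longrightarrow> zregs X ! i \<in> Ob D" "\<And>j. j < zlen X \<Longrightarrow> zsings X ! j \<in> Ob D"
    using X len ob nth_mem by (force simp: zlen_def)+
qed

lemma is_zigI: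
  assumes "length rs = Suc (length ss)" "length xs = length ss" "length xs' = length ss"
    "set rs \<subseteq> Ob D" "set ss \<subseteq> Ob D"
    "\<And>i. i < length ss \<Longrightarrow> in_hom D (rs ! i) (ss ! i) (xs ! i)"
    "\<And>i. i < length ss \<Longrightarrow> in_hom D (rs ! Suc i) (ss ! i) (xs' ! i)"
  shows "is_zig D (OZig rs ss xs xs')"
  using assms unfolding is_zig_def in_hom_def by auto

end

locale composable_zigzag_maps = zigzag_category D for D :: "('o, 'm) zcat" +
  fixes X Y Z :: "('o, 'm) zob" and \<phi> \<gamma> :: "nat list" and rf sf rg sg :: "('o, 'm) zar list"
  assumes first: "zigzag_map D X Y \<phi> rf sf" and second: "zigzag_map D Y Z \<gamma> rg sg"
begin

text \<open>The two singular-object composites through the forward and the backward leg of the middle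
  zigzag; the fibre conditions of the composite are obtained by walking along a fibre of \<open>\<gamma>\<close>
  on which \<open>hat \<phi>\<close> is constant, alternating between the two.\<close>
definition fwd_path :: "nat \<Rightarrow> ('o, 'm) zar" where
  "fwd_path l = Cmp D (sg ! l) (Cmp D (zfwd Y ! l) (rf ! l))"

definition bwd_path :: "nat \<Rightarrow> ('o, 'm) zar" where
  "bwd_path l = Cmp D (sg ! l) (Cmp D (zbwd Y ! l) (rf ! Suc l))"

lemmas f = zigzag_mapD[OF first] and g = zigzag_mapD[OF second]
lemmas X = is_zigD[OF f(1)] and Y = is_zigD[OF f(2)] and Z = is_zigD[OF g(2)]

lemma fwd_path_eq_bwd_path:
  "l < zlen Y \<Longrightarrow> hat \<phi> l = hat \<phi> (Suc l) \<Longrightarrow> fwd_path l = bwd_path l"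
  unfolding fwd_path_def bwd_path_def using f(11) by simp

lemma bwd_path_eq_fwd_path_Suc:
  assumes l: "Suc l < zlen Y" and "\<gamma> ! l = \<gamma> ! Suc l"
  shows "bwd_path l = fwd_path (Suc l)"
proof -
  have "bwd_path l = Cmp D (Cmp D (sg ! l) (zbwd Y ! l)) (rf ! Suc l)"
    unfolding bwd_path_def using comp_assoc[OF f(6) Y(9) g(7)] l by simp
  also have "\<dots> = Cmp D (Cmp D (sg ! Suc l) (zfwd Y ! Suc l)) (rf ! Suc l)"
    using g(10) assms by simp
  also have "\<dots> = fwd_path (Suc l)"
    unfolding fwd_path_def using comp_assoc[OF f(6) Y(8) g(7)] l by simp
  finally show ?thesis .
qed

lemma fwd_path_const:
  assumes "l \<le> l'" "l' < zlen Y" "\<gamma> ! l = \<gamma> ! l'" "hat \<phi> l = hat \<phi> l'"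
  shows "fwd_path l = fwd_path l'"
  using assms
proof (induction "l' - l" arbitrary: l)
  case (Suc d)
  have l: "Suc l \<le> l'" using Suc.hyps(2) by simp
  have "\<gamma> ! l \<le> \<gamma> ! Suc l" "\<gamma> ! Suc l \<le> \<gamma> ! l'"
    using mono_mapD[OF g(3)] l Suc.prems(2) by simp_all
  then have \<gamma>: "\<gamma> ! l = \<gamma> ! Suc l" "\<gamma> ! Suc l = \<gamma> ! l'" using Suc.prems(3) by simp_all
  have "hat \<phi> l \<le> hat \<phi> (Suc l)" "hat \<phi> (Suc l) \<le> hat \<phi> l'"
    using hat_mono[OF f(3)] l by simp_all
  then have \<phi>: "hat \<phi> l = hat \<phi> (Suc l)" "hat \<phi> (Suc l) = hat \<phi> l'" using Suc.prems(4) by simp_all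
  have "fwd_path l = bwd_path l" using fwd_path_eq_bwd_path \<phi>(1) l Suc.prems(2) by simp
  also have "\<dots> = fwd_path (Suc l)" using bwd_path_eq_fwd_path_Suc \<gamma>(1) l Suc.prems(2) by simp
  also have "\<dots> = fwd_path l'" using Suc.hyps(1)[of "Suc l"] Suc.hyps(2) l Suc.prems(2) \<gamma>(2) \<phi>(2)
    by simp
  finally show ?case .
qed simp

abbreviation comp_fs :: "nat list" where
  "comp_fs \<equiv> map (\<lambda>j. \<gamma> ! j) \<phi>"

abbreviation comp_rsl :: "('o, 'm) zar list" where
  "comp_rsl \<equiv> map (\<lambda>i. Cmp D (rg ! i) (rf ! hat \<gamma> i)) [0..<Suc (zlen Z)]"

abbreviation comp_ssl :: "('o, 'm) zar list" where
  "comp_ssl \<equiv> map (\<lambda>j. Cmp D (sg ! (\<phi> ! j)) (sf ! j)) [0..<length \<phi>]"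

lemma comp_fs_nth: "j < zlen X \<Longrightarrow> comp_fs ! j = \<gamma> ! (\<phi> ! j)"
  using mono_map_length[OF f(3)] by simp

lemma hat_comp_fs: "hat comp_fs i = hat \<phi> (hat \<gamma> i)"
  using hat_comp[OF f(3) g(3)] .

lemma comp_rsl_nth: "i \<le> zlen Z \<Longrightarrow> comp_rsl ! i = Cmp D (rg ! i) (rf ! hat \<gamma> i)"
  by (simp del: upt_Suc add: nth_map_upt)

lemma comp_ssl_nth: "j < zlen X \<Longrightarrow> comp_ssl ! j = Cmp D (sg ! (\<phi> ! j)) (sf ! j)"
  using mono_map_length[OF f(3)] by simp

lemma comp_rsl_in_hom: "i \<le> zlen Z \<Longrightarrow> in_hom D (zregs X ! hat comp_fs i) (zregs Z ! i)
  (comp_rsl ! i)"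
  unfolding comp_rsl_nth hat_comp_fs by (rule in_hom_comp[OF f(6)[OF hat_le[OF g(3)]] g(6)])

lemma comp_ssl_in_hom: "j < zlen X \<Longrightarrow> in_hom D (zsings X ! j) (zsings Z ! (comp_fs ! j))
  (comp_ssl ! j)"
  unfolding comp_ssl_nth comp_fs_nth by (rule in_hom_comp[OF f(7) g(7)[OF mono_map_less[OF f(3)]]])

lemma comp_ssl_fwd:
  assumes j: "j < zlen X" "hat comp_fs (comp_fs ! j) = j"
  shows "Cmp D (comp_ssl ! j) (zfwd X ! j) = Cmp D (zfwd Z ! (comp_fs ! j))
    (comp_rsl ! (comp_fs ! j))"
proof -
  define l where "l = \<phi> ! j"
  define i where "i = \<gamma> ! l"
  define h where "h = hat \<gamma> i"
  have l: "l < zlen Y" unfolding l_def using mono_map_less[OF f(3) j(1)] .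
  have i: "i < zlen Z" unfolding i_def using mono_map_less[OF g(3) l] .
  have hj: "hat \<phi> h = j" using j unfolding comp_fs_nth[OF j(1)] hat_comp_fs h_def i_def l_def
    by simp
  have hl: "h \<le> l" unfolding h_def i_def using hat_nth_le[OF g(3) l] .
  have h: "h < zlen Y" using hl l by simp
  have \<phi>l: "hat \<phi> l = j" using hat_mono[OF f(3) hl] hat_nth_le[OF f(3) j(1)] hj unfolding l_def
    by simp
  have \<gamma>h: "\<gamma> ! h = i"
    using hat_le_iff[OF g(3) h, of i] mono_mapD[OF g(3) hl l] unfolding h_def i_def by simp
  have "Cmp D (comp_ssl ! j) (zfwd X ! j) = Cmp D (sg ! l) (Cmp D (sf ! j) (zfwd X ! j))"
    using comp_assoc[OF X(8)[OF j(1)] f(7)[OF j(1)] g(7)[OF mono_map_less[OF f(3) j(1)]]]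
      comp_ssl_nth[OF j(1)] unfolding l_def by simp
  also have "\<dots> = fwd_path l" unfolding fwd_path_def using f(8)[OF j(1)] \<phi>l unfolding l_def by simp
  also have "\<dots> = fwd_path h" using fwd_path_const[OF hl l] \<gamma>h hj \<phi>l unfolding i_def by simp
  also have "\<dots> = Cmp D (Cmp D (sg ! h) (zfwd Y ! h)) (rf ! h)"
    unfolding fwd_path_def using comp_assoc[OF f(6) Y(8)[OF h] g(7)[OF h]] h by simp
  also have "\<dots> = Cmp D (Cmp D (zfwd Z ! i) (rg ! i)) (rf ! h)"
    using g(8)[OF h] \<gamma>h by (simp add: h_def)
  also have "\<dots> = Cmp D (zfwd Z ! i) (Cmp D (rg ! i) (rf ! h))"
    using comp_assoc[OF f(6)[OF hat_le[OF g(3)]] g(6) Z(8)[OF i]] i unfolding h_def by simp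
  finally show ?thesis
    using comp_rsl_nth[of i] comp_fs_nth[OF j(1)] i unfolding h_def i_def l_def by simp
qed

lemma comp_ssl_bwd:
  assumes j: "j < zlen X" "hat comp_fs (Suc (comp_fs ! j)) = Suc j"
  shows "Cmp D (comp_ssl ! j) (zbwd X ! j) = Cmp D (zbwd Z ! (comp_fs ! j))
    (comp_rsl ! Suc (comp_fs ! j))"
proof -
  define l where "l = \<phi> ! j"
  define i where "i = \<gamma> ! l"
  define h' where "h' = hat \<gamma> (Suc i)"
  define q where "q = h' - 1"
  have l: "l < zlen Y" unfolding l_def using mono_map_less[OF f(3) j(1)] .
  have i: "i < zlen Z" unfolding i_def using mono_map_less[OF g(3) l] .
  have hh': "hat \<phi> h' = Suc j" using j unfolding comp_fs_nth[OF j(1)] hat_comp_fs h'_def i_def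
    l_def by simp
  have lh': "Suc l \<le> h'" unfolding h'_def i_def using Suc_le_hat_Suc_nth[OF g(3) l] .
  have q: "l \<le> q" "q < zlen Y" "Suc q = h'" using lh' hat_le[OF g(3), of "Suc i"]
    unfolding q_def h'_def by auto
  have \<gamma>q: "\<gamma> ! q = i"
    using mono_mapD[OF g(3) q(1,2)] hat_le_iff[OF g(3) q(2), of "Suc i"] q(3)
      unfolding i_def h'_def by simp
  have \<phi>l: "hat \<phi> (Suc l) = Suc j"
    using Suc_le_hat_Suc_nth[OF f(3) j(1)] hat_mono[OF f(3) lh'] hh' unfolding l_def by simp
  have "Cmp D (comp_ssl ! j) (zbwd X ! j) = Cmp D (sg ! l) (Cmp D (sf ! j) (zbwd X ! j))"
    using comp_assoc[OF X(9)[OF j(1)] f(7)[OF j(1)] g(7)[OF mono_map_less[OF f(3) j(1)]]]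
      comp_ssl_nth[OF j(1)] unfolding l_def by simp
  also have "\<dots> = bwd_path l" unfolding bwd_path_def using f(9)[OF j(1)] \<phi>l unfolding l_def by simp
  also have "\<dots> = bwd_path q"
  proof (cases "l = q")
    case False
    then have lq: "Suc l \<le> q" using q by simp
    have \<gamma>l: "\<gamma> ! Suc l = \<gamma> ! l"
      using mono_mapD[OF g(3) lq q(2)] mono_mapD[OF g(3), of l "Suc l"] lq q(2) \<gamma>q unfolding i_def
        by simp
    have \<phi>q: "hat \<phi> q = Suc j"
      using hat_mono[OF f(3) lq] hat_mono[OF f(3), of q h'] q \<phi>l hh' by simp
    have "bwd_path l = fwd_path (Suc l)" using bwd_path_eq_fwd_path_Suc \<gamma>l lq q(2) by simp
    also have "\<dots> = fwd_path q" using fwd_path_const[OF lq q(2)] \<gamma>l \<gamma>q \<phi>q \<phi>l unfolding i_def by simp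
    also have "\<dots> = bwd_path q" using fwd_path_eq_bwd_path[OF q(2)] \<phi>q hh' q(3) by simp
    finally show ?thesis .
  qed simp
  also have "\<dots> = Cmp D (Cmp D (sg ! q) (zbwd Y ! q)) (rf ! Suc q)"
    unfolding bwd_path_def using comp_assoc[OF f(6) Y(9)[OF q(2)] g(7)[OF q(2)]] q by simp
  also have "\<dots> = Cmp D (Cmp D (zbwd Z ! i) (rg ! Suc i)) (rf ! h')"
    using g(9)[OF q(2)] \<gamma>q q(3) unfolding h'_def by simp
  also have "\<dots> = Cmp D (zbwd Z ! i) (Cmp D (rg ! Suc i) (rf ! h'))"
    using comp_assoc[OF f(6)[OF hat_le[OF g(3)]] g(6) Z(9)[OF i]] i unfolding h'_def by simp
  finally show ?thesis
    using comp_rsl_nth[of "Suc i"] comp_fs_nth[OF j(1)] i unfolding h'_def i_def l_def by simp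
qed

lemma comp_ssl_inner:
  assumes j: "Suc j < zlen X" "comp_fs ! j = comp_fs ! Suc j"
  shows "Cmp D (comp_ssl ! j) (zbwd X ! j) = Cmp D (comp_ssl ! Suc j) (zfwd X ! Suc j)"
proof -
  have j': "j < zlen X" using j by simp
  define l l' where "l = \<phi> ! j" and "l' = \<phi> ! Suc j"
  have ll': "l \<le> l'" unfolding l_def l'_def using mono_mapD[OF f(3) _ j(1)] by simp
  have l: "l < zlen Y" "l' < zlen Y" unfolding l_def l'_def using mono_map_less[OF f(3)] j by auto
  have \<gamma>l: "\<gamma> ! l = \<gamma> ! l'" using j(2) comp_fs_nth[OF j'] comp_fs_nth[OF j(1)]
    unfolding l_def l'_def by simp
  have left: "Cmp D (comp_ssl ! j) (zbwd X ! j) = Cmp D (sg ! l) (Cmp D (sf ! j) (zbwd X ! j))"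
    using comp_assoc[OF X(9)[OF j'] f(7)[OF j'] g(7)[OF mono_map_less[OF f(3) j']]]
      comp_ssl_nth[OF j'] unfolding l_def by simp
  have right: "Cmp D (comp_ssl ! Suc j) (zfwd X ! Suc j) = Cmp D (sg ! l')
    (Cmp D (sf ! Suc j) (zfwd X ! Suc j))"
    using comp_assoc[OF X(8)[OF j(1)] f(7)[OF j(1)] g(7)[OF mono_map_less[OF f(3) j(1)]]]
      comp_ssl_nth[OF j(1)] unfolding l'_def by simp
  show ?thesis
  proof (cases "l = l'")
    case True
    then show ?thesis unfolding left right using f(10)[OF j(1)] unfolding l_def l'_def by simp
  next
    case False
    then have lt: "Suc l \<le> l'" using ll' by simp
    have \<phi>l: "hat \<phi> (Suc l) = Suc j"
      using Suc_le_hat_Suc_nth[OF f(3) j'] hat_le_iff[OF f(3) j(1), of "Suc l"] lt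
        unfolding l_def l'_def by simp
    have \<phi>l': "hat \<phi> l' = Suc j"
      using hat_nth_le[OF f(3) j(1)] hat_le_iff[OF f(3) j', of l'] lt unfolding l_def l'_def by simp
    have \<gamma>Sl: "\<gamma> ! Suc l = \<gamma> ! l"
      using mono_mapD[OF g(3) lt l(2)] mono_mapD[OF g(3), of l "Suc l"] lt l(2) \<gamma>l by simp
    have "Cmp D (comp_ssl ! j) (zbwd X ! j) = bwd_path l"
      unfolding left bwd_path_def using f(9)[OF j'] \<phi>l unfolding l_def by simp
    also have "\<dots> = fwd_path (Suc l)" using bwd_path_eq_fwd_path_Suc \<gamma>Sl lt l by simp
    also have "\<dots> = fwd_path l'" using fwd_path_const[OF lt l(2)] \<gamma>Sl \<gamma>l \<phi>l \<phi>l' by simp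
    also have "\<dots> = Cmp D (comp_ssl ! Suc j) (zfwd X ! Suc j)"
      unfolding right fwd_path_def using f(8)[OF j(1)] \<phi>l' unfolding l'_def by simp
    finally show ?thesis .
  qed
qed

lemma comp_rsl_empty_fiber:
  assumes i: "i < zlen Z" and e: "hat comp_fs i = hat comp_fs (Suc i)"
  shows "Cmp D (zfwd Z ! i) (comp_rsl ! i) = Cmp D (zbwd Z ! i) (comp_rsl ! Suc i)"
proof -
  define h h' where "h = hat \<gamma> i" and "h' = hat \<gamma> (Suc i)"
  have hh': "h \<le> h'" "h' \<le> zlen Y" unfolding h_def h'_def using hat_mono[OF g(3)] hat_le[OF g(3)]
    by simp_all
  have \<phi>h: "hat \<phi> h = hat \<phi> h'" using e unfolding hat_comp_fs h_def h'_def .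
  have left: "Cmp D (zfwd Z ! i) (comp_rsl ! i) = Cmp D (Cmp D (zfwd Z ! i) (rg ! i)) (rf ! h)"
    using comp_assoc[OF f(6)[OF hat_le[OF g(3)]] g(6) Z(8)[OF i]] comp_rsl_nth[of i] i
      unfolding h_def by simp
  have right: "Cmp D (zbwd Z ! i) (comp_rsl ! Suc i) = Cmp D (Cmp D (zbwd Z ! i) (rg ! Suc i))
    (rf ! h')"
    using comp_assoc[OF f(6)[OF hat_le[OF g(3)]] g(6) Z(9)[OF i]] comp_rsl_nth[of "Suc i"] i
    unfolding h'_def by simp
  show ?thesis
  proof (cases "h = h'")
    case True
    then show ?thesis unfolding left right using g(11)[OF i] unfolding h_def h'_def by simp
  next
    case False
    define q where "q = h' - 1"
    have q: "h \<le> q" "q < zlen Y" "Suc q = h'" using False hh' unfolding q_def by auto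
    have h: "h < zlen Y" using q by simp
    have \<gamma>h: "\<gamma> ! h = i"
      using hat_le_iff[OF g(3) h, of i] hat_le_iff[OF g(3) h, of "Suc i"] False hh'(1)
      unfolding h_def h'_def by simp
    have \<gamma>q: "\<gamma> ! q = i"
      using hat_le_iff[OF g(3) q(2), of i] hat_le_iff[OF g(3) q(2), of "Suc i"] q
      unfolding h_def h'_def by simp
    have \<phi>q: "hat \<phi> h = hat \<phi> q" "hat \<phi> q = hat \<phi> (Suc q)"
      using hat_mono[OF f(3) q(1)] hat_mono[OF f(3), of q h'] q \<phi>h by simp_all
    have "Cmp D (zfwd Z ! i) (comp_rsl ! i) = Cmp D (Cmp D (sg ! h) (zfwd Y ! h)) (rf ! h)"
      unfolding left using g(8)[OF h] \<gamma>h unfolding h_def by simp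
    also have "\<dots> = fwd_path h" unfolding fwd_path_def
      using comp_assoc[OF f(6) Y(8)[OF h] g(7)[OF h]] h by simp
    also have "\<dots> = fwd_path q" using fwd_path_const[OF q(1,2)] \<gamma>h \<gamma>q \<phi>q by simp
    also have "\<dots> = bwd_path q" using fwd_path_eq_bwd_path[OF q(2)] \<phi>q by simp
    also have "\<dots> = Cmp D (Cmp D (sg ! q) (zbwd Y ! q)) (rf ! Suc q)"
      unfolding bwd_path_def using comp_assoc[OF f(6) Y(9)[OF q(2)] g(7)[OF q(2)]] q by simp
    also have "\<dots> = Cmp D (zbwd Z ! i) (comp_rsl ! Suc i)"
      unfolding right using g(9)[OF q(2)] \<gamma>q q(3) unfolding h'_def by simp
    finally show ?thesis .
  qed
qed

lemma zigzag_map_comp: "zigzag_map D X Z comp_fs comp_rsl comp_ssl"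
  by (rule zigzag_mapI[OF f(1) g(2) mono_map_comp[OF f(3) g(3)] _ _ comp_rsl_in_hom comp_ssl_in_hom
        comp_ssl_fwd comp_ssl_bwd comp_ssl_inner comp_rsl_empty_fiber])
    (simp_all add: mono_map_length[OF f(3)])

end

context zigzag_category
begin

lemma is_zmap_Cmp:
  assumes F: "is_zmap D F" and G: "is_zmap D G" and FG: "ztgt F = zsrc G"
  shows "is_zmap D (Cmp (Zcat D) G F)"
proof -
  interpret composable_zigzag_maps D "zsrc F" "ztgt F" "ztgt G" "zfs F" "zfs G"
    "zrsl F" "zssl F" "zrsl G" "zssl G"
    using is_zmapD(2)[OF F] is_zmapD(2)[OF G] FG by unfold_locales simp_all
  show ?thesis unfolding Zcat_simps is_zmap_iff by (rule zigzag_map_comp)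
qed

lemma is_zmap_Idt:
  assumes X: "is_zig D X"
  shows "is_zmap D (Idt (Zcat D) X)"
  unfolding Zcat_simps is_zmap_iff
proof (rule zigzag_mapI[OF X X mono_map_id])
  note X = is_zigD[OF X]
  show "length (map (Idt D) (zregs X)) = Suc (zlen X)" "length (map (Idt D) (zsings X)) = zlen X"
    using X by simp_all
  show "in_hom D (zregs X ! hat [0..<zlen X] i) (zregs X ! i) (map (Idt D) (zregs X) ! i)"
    if "i \<le> zlen X" for i
    using in_hom_id[OF X(6)[OF that]] hat_id[OF that] X(2) that by simp
  show "in_hom D (zsings X ! j) (zsings X ! ([0..<zlen X] ! j)) (map (Idt D) (zsings X) ! j)"
    if "j < zlen X" for j
    using in_hom_id[OF X(7)[OF that]] X(3) that by simp
  show "Cmp D (map (Idt D) (zsings X) ! j) (zfwd X ! j) =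
      Cmp D (zfwd X ! ([0..<zlen X] ! j)) (map (Idt D) (zregs X) ! ([0..<zlen X] ! j))"
    if "j < zlen X" for j
    using comp_id_left[OF X(8)[OF that]] comp_id_right[OF X(8)[OF that]] X(2,3) that by simp
  show "Cmp D (map (Idt D) (zsings X) ! j) (zbwd X ! j) =
      Cmp D (zbwd X ! ([0..<zlen X] ! j)) (map (Idt D) (zregs X) ! Suc ([0..<zlen X] ! j))"
    if "j < zlen X" for j
    using comp_id_left[OF X(9)[OF that]] comp_id_right[OF X(9)[OF that]] X(2,3) that by simp
  show "Cmp D (map (Idt D) (zsings X) ! j) (zbwd X ! j) =
      Cmp D (map (Idt D) (zsings X) ! Suc j) (zfwd X ! Suc j)"
    if "Suc j < zlen X" "[0..<zlen X] ! j = [0..<zlen X] ! Suc j" for j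
    using that by simp
  show "Cmp D (zfwd X ! i) (map (Idt D) (zregs X) ! i) = Cmp D (zbwd X ! i)
    (map (Idt D) (zregs X) ! Suc i)"
    if "i < zlen X" "hat [0..<zlen X] i = hat [0..<zlen X] (Suc i)" for i
    using that hat_id[of i "zlen X"] hat_id[of "Suc i" "zlen X"] by simp
qed

lemma Zcat_comp_Idt_left:
  assumes "is_zmap D F"
  shows "Cmp (Zcat D) (Idt (Zcat D) (ztgt F)) F = F"
proof -
  note f = zigzag_mapD[OF is_zmapD(2)[OF assms]]
  note Y = is_zigD[OF f(2)]
  have "map (\<lambda>j. [0..<zlen (ztgt F)] ! j) (zfs F) = zfs F"
    by (rule map_nth_upt_mono_map[OF f(3)])
  moreover have "map
    (\<lambda>i. Cmp D (map (Idt D) (zregs (ztgt F)) ! i) (zrsl F ! hat [0..<zlen (ztgt F)] i))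
      [0..<Suc (zlen (ztgt F))] = zrsl F"
    by (rule nth_equalityI)
      (use f(4) comp_id_left[OF f(6)] hat_id Y(2) in \<open>simp_all del: upt_Suc add: nth_map_upt\<close>)
  moreover have "map (\<lambda>j. Cmp D (map (Idt D) (zsings (ztgt F)) ! (zfs F ! j)) (zssl F ! j))
      [0..<length (zfs F)] = zssl F"
    by (rule nth_equalityI)
      (use f(5) comp_id_left[OF f(7)] mono_map_less[OF f(3)] mono_map_length[OF f(3)] Y(3) in auto)
  ultimately show ?thesis unfolding Zcat_simps using is_zmapD(1)[OF assms] by simp
qed

lemma Zcat_comp_Idt_right:
  assumes "is_zmap D F"
  shows "Cmp (Zcat D) F (Idt (Zcat D) (zsrc F)) = F"
proof -
  note f = zigzag_mapD[OF is_zmapD(2)[OF assms]]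
  note X = is_zigD[OF f(1)]
  have "map (\<lambda>j. zfs F ! j) [0..<zlen (zsrc F)] = zfs F"
    by (rule nth_equalityI) (use mono_map_length[OF f(3)] in auto)
  moreover have "map (\<lambda>i. Cmp D (zrsl F ! i) (map (Idt D) (zregs (zsrc F)) ! hat (zfs F) i))
      [0..<Suc (zlen (ztgt F))] = zrsl F"
    by (rule nth_equalityI)
      (use f(4) comp_id_right[OF f(6)] hat_le[OF f(3)] X(2) in
        \<open>simp_all del: upt_Suc add: nth_map_upt less_Suc_eq_le\<close>)
  moreover have "map
    (\<lambda>j. Cmp D (zssl F ! ([0..<zlen (zsrc F)] ! j)) (map (Idt D) (zsings (zsrc F)) ! j))
      [0..<length [0..<zlen (zsrc F)]] = zssl F"
    by (rule nth_equalityI) (use f(5) comp_id_right[OF f(7)] X(3) in auto)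
  ultimately show ?thesis unfolding Zcat_simps using is_zmapD(1)[OF assms] by simp
qed

lemma Zcat_comp_assoc:
  assumes F: "is_zmap D F" and G: "is_zmap D G" and H: "is_zmap D H"
    and FG: "ztgt F = zsrc G" and GH: "ztgt G = zsrc H"
  shows "Cmp (Zcat D) H (Cmp (Zcat D) G F) = Cmp (Zcat D) (Cmp (Zcat D) H G) F"
proof (rule Cmp_Zcat_eqI)
  note f = zigzag_mapD[OF is_zmapD(2)[OF F], unfolded FG]
  note g = zigzag_mapD[OF is_zmapD(2)[OF G], unfolded GH]
  note h = zigzag_mapD[OF is_zmapD(2)[OF H]]
  show "zfs (Cmp (Zcat D) H (Cmp (Zcat D) G F)) = zfs (Cmp (Zcat D) (Cmp (Zcat D) H G) F)"
    using mono_map_less[OF f(3)] mono_map_length[OF f(3)] mono_map_length[OF g(3)]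
    by (auto simp: Cmp_Zcat_simps in_set_conv_nth)
  show "zrsl (Cmp (Zcat D) H (Cmp (Zcat D) G F)) = zrsl (Cmp (Zcat D) (Cmp (Zcat D) H G) F)"
  proof (rule nth_equalityI)
    fix i assume "i < length (zrsl (Cmp (Zcat D) H (Cmp (Zcat D) G F)))"
    then have i: "i \<le> zlen (ztgt H)" by (simp add: Cmp_Zcat_nth)
    show "zrsl (Cmp (Zcat D) H (Cmp (Zcat D) G F)) ! i =
        zrsl (Cmp (Zcat D) (Cmp (Zcat D) H G) F) ! i"
      using i hat_le[OF h(3)]
        comp_assoc[OF f(6)[OF hat_le[OF g(3)]] g(6)[OF hat_le[OF h(3)]] h(6)[OF i]]
        hat_comp[OF g(3) h(3)]
      by (simp add: Cmp_Zcat_nth Cmp_Zcat_simps GH)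
  qed (simp add: Cmp_Zcat_nth Cmp_Zcat_simps)
  show "zssl (Cmp (Zcat D) H (Cmp (Zcat D) G F)) = zssl (Cmp (Zcat D) (Cmp (Zcat D) H G) F)"
  proof (rule nth_equalityI)
    fix j assume "j < length (zssl (Cmp (Zcat D) H (Cmp (Zcat D) G F)))"
    then have j: "j < zlen (zsrc F)" using mono_map_length[OF f(3)]
      by (simp add: Cmp_Zcat_nth Cmp_Zcat_simps)
    have fj: "zfs F ! j < zlen (zsrc G)" using mono_map_less[OF f(3) j] .
    show "zssl (Cmp (Zcat D) H (Cmp (Zcat D) G F)) ! j =
        zssl (Cmp (Zcat D) (Cmp (Zcat D) H G) F) ! j"
      using j fj mono_map_length[OF f(3)] mono_map_length[OF g(3)]
        comp_assoc[OF f(7)[OF j] g(7)[OF fj] h(7)[OF mono_map_less[OF g(3) fj]]]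
      by (simp add: Cmp_Zcat_nth Cmp_Zcat_simps)
  qed (simp add: Cmp_Zcat_nth Cmp_Zcat_simps)
qed (simp_all add: Cmp_Zcat_simps)

lemma is_category_Zcat: "is_category (Zcat D)"
  unfolding is_category_def
proof (intro conjI ballI impI)
  fix f assume "f \<in> Ar (Zcat D)"
  then have f: "is_zmap D f" by (simp add: Zcat_simps)
  show "Dom (Zcat D) f \<in> Ob (Zcat D)" "Cod (Zcat D) f \<in> Ob (Zcat D)"
    using zigzag_mapD(1,2)[OF is_zmapD(2)[OF f]] by (simp_all add: Zcat_simps)
  show "Cmp (Zcat D) (Idt (Zcat D) (Cod (Zcat D) f)) f = f"
    using Zcat_comp_Idt_left[OF f] by (simp add: Zcat_simps(4))
  show "Cmp (Zcat D) f (Idt (Zcat D) (Dom (Zcat D) f)) = f"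
    using Zcat_comp_Idt_right[OF f] by (simp add: Zcat_simps(3))
next
  fix X assume "X \<in> Ob (Zcat D)"
  then show "Idt (Zcat D) X \<in> Ar (Zcat D)" "Dom (Zcat D) (Idt (Zcat D) X) = X"
    "Cod (Zcat D) (Idt (Zcat D) X) = X"
    using is_zmap_Idt by (simp_all add: Zcat_simps)
next
  fix f g assume "f \<in> Ar (Zcat D)" "g \<in> Ar (Zcat D)" "Cod (Zcat D) f = Dom (Zcat D) g"
  then show "Cmp (Zcat D) g f \<in> Ar (Zcat D)" "Dom (Zcat D) (Cmp (Zcat D) g f) = Dom (Zcat D) f"
    "Cod (Zcat D) (Cmp (Zcat D) g f) = Cod (Zcat D) g"
    using is_zmap_Cmp[of f g] by (simp_all add: Zcat_simps(1-4)) (simp_all add: Zcat_simps)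
next
  fix f g h assume "f \<in> Ar (Zcat D)" "g \<in> Ar (Zcat D)" "h \<in> Ar (Zcat D)"
    "Cod (Zcat D) f = Dom (Zcat D) g" "Cod (Zcat D) g = Dom (Zcat D) h"
  then show "Cmp (Zcat D) h (Cmp (Zcat D) g f) = Cmp (Zcat D) (Cmp (Zcat D) h g) f"
    using Zcat_comp_assoc[of f g h] by (simp add: Zcat_simps(1-4))
qed

end

lemma is_category_Zn: "is_category C \<Longrightarrow> is_category (Zn C k)"
proof (induction k)
  case (Suc k)
  then interpret zigzag_category "Zn C k" by unfold_locales
  show ?case using is_category_Zcat by simp
qed (simp add: is_category_lift0)

section \<open>Cocartesian lifts along injections\<close>

locale strict_mono_map =
  fixes \<phi> :: "nat list" and n m :: nat
  assumes mono_map: "mono_map n m \<phi>" and distinct: "distinct \<phi>"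
begin

lemma length_eq: "length \<phi> = n"
  using mono_map_length[OF mono_map] .

lemma nth_less_nth: "j < k \<Longrightarrow> k < n \<Longrightarrow> \<phi> ! j < \<phi> ! k"
  using mono_mapD[OF mono_map, of j k] nth_eq_iff_index_eq[OF distinct, of j k] length_eq
  by fastforce

lemma nth_in_set: "k < n \<Longrightarrow> \<phi> ! k \<in> set \<phi>"
  using length_eq by simp

lemma hat_nth: "k < n \<Longrightarrow> hat \<phi> (\<phi> ! k) = k"
  by (rule hat_eqI[OF mono_map])
    (use nth_less_nth mono_mapD[OF mono_map] in \<open>auto simp: not_le[symmetric]\<close>)

lemma hat_Suc_nth: "k < n \<Longrightarrow> hat \<phi> (Suc (\<phi> ! k)) = Suc k"
  by (rule hat_eqI[OF mono_map])
    (use nth_less_nth mono_mapD[OF mono_map] in \<open>auto simp: Suc_le_eq not_le[symmetric]\<close>)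

lemma hat_less: "j \<in> set \<phi> \<Longrightarrow> hat \<phi> j < n"
  using hat_nth length_eq by (auto simp: in_set_conv_nth)

lemma nth_hat: "j \<in> set \<phi> \<Longrightarrow> \<phi> ! hat \<phi> j = j"
  using hat_nth length_eq by (auto simp: in_set_conv_nth)

lemma hat_Suc_in: "j \<in> set \<phi> \<Longrightarrow> hat \<phi> (Suc j) = Suc (hat \<phi> j)"
  using hat_Suc_nth[OF hat_less] nth_hat by metis

lemma hat_Suc_notin: "j \<notin> set \<phi> \<Longrightarrow> hat \<phi> (Suc j) = hat \<phi> j"
proof (rule hat_eqI[OF mono_map hat_le[OF mono_map]])
  fix k assume "j \<notin> set \<phi>" "k < n"
  then show "hat \<phi> j \<le> k \<longleftrightarrow> Suc j \<le> \<phi> ! k"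
    using hat_le_iff[OF mono_map \<open>k < n\<close>, of j] nth_in_set[OF \<open>k < n\<close>]
      by (auto simp: Suc_le_eq le_less)
qed

end

text \<open>The codomain of the cocartesian lift of \<open>X\<close> along an injection \<open>\<phi> : [n] \<rightarrow> [m]\<close>: the
  singular positions outside the image of \<open>\<phi>\<close> are filled with identity cospans on the regular
  object of \<open>X\<close> sitting there.\<close>
definition lift_zig :: "('o, 'm) zcat \<Rightarrow> ('o, 'm) zob \<Rightarrow> nat list \<Rightarrow> nat \<Rightarrow> ('o, 'm) zob" where
  "lift_zig D X \<phi> m = OZig (map (\<lambda>i. zregs X ! hat \<phi> i) [0..<Suc m])
     (map (\<lambda>j. if j \<in> set \<phi> then zsings X ! hat \<phi> j else zregs X ! hat \<phi> j) [0..<m])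
     (map (\<lambda>j. if j \<in> set \<phi> then zfwd X ! hat \<phi> j else Idt D (zregs X ! hat \<phi> j)) [0..<m])
     (map (\<lambda>j. if j \<in> set \<phi> then zbwd X ! hat \<phi> j else Idt D (zregs X ! hat \<phi> j)) [0..<m])"

definition lift_map :: "('o, 'm) zcat \<Rightarrow> ('o, 'm) zob \<Rightarrow> nat list \<Rightarrow> nat \<Rightarrow> ('o, 'm) zar" where
  "lift_map D X \<phi> m = AZig X (lift_zig D X \<phi> m) \<phi>
     (map (Idt D) (zregs (lift_zig D X \<phi> m))) (map (Idt D) (zsings X))"

lemma lift_zig_simps:
  "zlen (lift_zig D X \<phi> m) = m"
  "length (zregs (lift_zig D X \<phi> m)) = Suc m"
  "i \<le> m \<Longrightarrow> zregs (lift_zig D X \<phi> m) ! i = zregs X ! hat \<phi> i"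
  "j < m \<Longrightarrow> zsings (lift_zig D X \<phi> m) ! j =
     (if j \<in> set \<phi> then zsings X ! hat \<phi> j else zregs X ! hat \<phi> j)"
  "j < m \<Longrightarrow> zfwd (lift_zig D X \<phi> m) ! j =
     (if j \<in> set \<phi> then zfwd X ! hat \<phi> j else Idt D (zregs X ! hat \<phi> j))"
  "j < m \<Longrightarrow> zbwd (lift_zig D X \<phi> m) ! j =
     (if j \<in> set \<phi> then zbwd X ! hat \<phi> j else Idt D (zregs X ! hat \<phi> j))"
  unfolding lift_zig_def zlen_def by (simp_all del: upt_Suc add: nth_map_upt less_Suc_eq_le)

lemma lift_map_simps:
  "zsrc (lift_map D X \<phi> m) = X" "ztgt (lift_map D X \<phi> m) = lift_zig D X \<phi> m"
  "zfs (lift_map D X \<phi> m) = \<phi>"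
  unfolding lift_map_def by simp_all

lemma lift_zig_at_image:
  assumes \<phi>: "strict_mono_map \<phi> (zlen X) m" and j: "j < zlen X"
  shows "zregs (lift_zig D X \<phi> m) ! (\<phi> ! j) = zregs X ! j"
    "zregs (lift_zig D X \<phi> m) ! Suc (\<phi> ! j) = zregs X ! Suc j"
    "zsings (lift_zig D X \<phi> m) ! (\<phi> ! j) = zsings X ! j"
    "zfwd (lift_zig D X \<phi> m) ! (\<phi> ! j) = zfwd X ! j"
    "zbwd (lift_zig D X \<phi> m) ! (\<phi> ! j) = zbwd X ! j"
  using mono_map_less[OF strict_mono_map.mono_map[OF \<phi>] j] j strict_mono_map.hat_nth[OF \<phi> j]
    strict_mono_map.hat_Suc_nth[OF \<phi> j] strict_mono_map.nth_in_set[OF \<phi> j]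
  by (simp_all add: lift_zig_simps)

context zigzag_category
begin

lemma is_zig_lift_zig:
  assumes X: "is_zig D X" and \<phi>: "strict_mono_map \<phi> (zlen X) m"
  shows "is_zig D (lift_zig D X \<phi> m)"
proof -
  interpret strict_mono_map \<phi> "zlen X" m by fact
  note X = is_zigD[OF X]
  have ob: "zregs X ! hat \<phi> i \<in> Ob D" for i using X(6)[OF hat_le[OF mono_map]] .
  show ?thesis unfolding lift_zig_def
  proof (rule is_zigI)
    show "set (map (\<lambda>i. zregs X ! hat \<phi> i) [0..<Suc m]) \<subseteq> Ob D"
      "set (map (\<lambda>j. if j \<in> set \<phi> then zsings X ! hat \<phi> j else zregs X ! hat \<phi> j) [0..<m]) \<subseteq> Ob D"
      using ob X(7)[OF hat_less] by auto
  next
    fix j assume "j < length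
      (map (\<lambda>j. if j \<in> set \<phi> then zsings X ! hat \<phi> j else zregs X ! hat \<phi> j) [0..<m])"
    then have j: "j < m" by simp
    show "in_hom D (map (\<lambda>i. zregs X ! hat \<phi> i) [0..<Suc m] ! j)
        (map (\<lambda>j. if j \<in> set \<phi> then zsings X ! hat \<phi> j else zregs X ! hat \<phi> j) [0..<m] ! j)
        (map (\<lambda>j. if j \<in> set \<phi> then zfwd X ! hat \<phi> j else Idt D (zregs X ! hat \<phi> j)) [0..<m] ! j)"
      using j X(8)[OF hat_less] in_hom_id[OF ob] by (simp del: upt_Suc add: nth_map_upt)
    show "in_hom D (map (\<lambda>i. zregs X ! hat \<phi> i) [0..<Suc m] ! Suc j)
        (map (\<lambda>j. if j \<in> set \<phi> then zsings X ! hat \<phi> j else zregs X ! hat \<phi> j) [0..<m] ! j)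
        (map (\<lambda>j. if j \<in> set \<phi> then zbwd X ! hat \<phi> j else Idt D (zregs X ! hat \<phi> j)) [0..<m] ! j)"
      using j X(9)[OF hat_less] in_hom_id[OF ob] hat_Suc_in hat_Suc_notin
      by (simp del: upt_Suc add: nth_map_upt)
  qed simp_all
qed

lemma is_zmap_lift_map:
  assumes X: "is_zig D X" and \<phi>: "strict_mono_map \<phi> (zlen X) m"
  shows "is_zmap D (lift_map D X \<phi> m)"
  unfolding lift_map_def is_zmap_iff
proof (rule zigzag_mapI)
  interpret strict_mono_map \<phi> "zlen X" m by fact
  note X' = is_zigD[OF X] and L = lift_zig_simps[where D = D and X = X and \<phi> = \<phi> and m = m]
  have ob: "zregs X ! hat \<phi> i \<in> Ob D" for i using X'(6)[OF hat_le[OF mono_map]] .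
  have regs: "map (Idt D) (zregs (lift_zig D X \<phi> m)) ! i = Idt D (zregs X ! hat \<phi> i)" if "i \<le> m"
    for i
    using that L(2,3) by simp
  have at_image: "map (Idt D) (zsings X) ! j = Idt D (zsings X ! j)"
    "map (Idt D) (zregs (lift_zig D X \<phi> m)) ! (\<phi> ! j) = Idt D (zregs X ! j)"
    "map (Idt D) (zregs (lift_zig D X \<phi> m)) ! Suc (\<phi> ! j) = Idt D (zregs X ! Suc j)"
    "zsings (lift_zig D X \<phi> m) ! (\<phi> ! j) = zsings X ! j"
    "zfwd (lift_zig D X \<phi> m) ! (\<phi> ! j) = zfwd X ! j"
    "zbwd (lift_zig D X \<phi> m) ! (\<phi> ! j) = zbwd X ! j"
    if "j < zlen X" for j
    using mono_map_less[OF mono_map that] X'(3) that lift_zig_at_image[OF \<phi> that] L(2) by simp_all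
  show "is_zig D X" "is_zig D (lift_zig D X \<phi> m)" "mono_map (zlen X) (zlen (lift_zig D X \<phi> m)) \<phi>"
    using X is_zig_lift_zig[OF X \<phi>] mono_map L(1) by simp_all
  show "length (map (Idt D) (zregs (lift_zig D X \<phi> m))) = Suc (zlen (lift_zig D X \<phi> m))"
    "length (map (Idt D) (zsings X)) = zlen X"
    using L(1,2) X'(3) by simp_all
  show "in_hom D (zregs X ! hat \<phi> i) (zregs (lift_zig D X \<phi> m) ! i)
      (map (Idt D) (zregs (lift_zig D X \<phi> m)) ! i)" if "i \<le> zlen (lift_zig D X \<phi> m)" for i
    using that in_hom_id[OF ob] by (simp add: L(1,3) regs)
  show "in_hom D (zsings X ! j) (zsings (lift_zig D X \<phi> m) ! (\<phi> ! j)) (map (Idt D) (zsings X) ! j)"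
    if "j < zlen X" for j
    unfolding at_image[OF that] using in_hom_id[OF X'(7)[OF that]] .
  show "Cmp D (map (Idt D) (zsings X) ! j) (zfwd X ! j) =
      Cmp D (zfwd (lift_zig D X \<phi> m) ! (\<phi> ! j)) (map (Idt D) (zregs (lift_zig D X \<phi> m)) ! (\<phi> ! j))"
    if "j < zlen X" for j
    unfolding at_image[OF that] using comp_id_left[OF X'(8)[OF that]]
      comp_id_right[OF X'(8)[OF that]] by simp
  show "Cmp D (map (Idt D) (zsings X) ! j) (zbwd X ! j) =
      Cmp D (zbwd (lift_zig D X \<phi> m) ! (\<phi> ! j))
        (map (Idt D) (zregs (lift_zig D X \<phi> m)) ! Suc (\<phi> ! j))"
    if "j < zlen X" for j
    unfolding at_image[OF that] using comp_id_left[OF X'(9)[OF that]]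
      comp_id_right[OF X'(9)[OF that]] by simp
  show "Cmp D (map (Idt D) (zsings X) ! j) (zbwd X ! j) =
      Cmp D (map (Idt D) (zsings X) ! Suc j) (zfwd X ! Suc j)"
    if "Suc j < zlen X" "\<phi> ! j = \<phi> ! Suc j" for j
    using that nth_less_nth[of j "Suc j"] by simp
  show "Cmp D (zfwd (lift_zig D X \<phi> m) ! i) (map (Idt D) (zregs (lift_zig D X \<phi> m)) ! i) =
      Cmp D (zbwd (lift_zig D X \<phi> m) ! i) (map (Idt D) (zregs (lift_zig D X \<phi> m)) ! Suc i)"
    if "i < zlen (lift_zig D X \<phi> m)" "hat \<phi> i = hat \<phi> (Suc i)" for i
  proof -
    have "i \<notin> set \<phi>" using that(2) hat_Suc_in by fastforce
    then show ?thesis using that by (simp add: L(1,5,6) regs)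
  qed
qed

lemma Cmp_lift_map:
  assumes X: "is_zig D X" and \<phi>: "strict_mono_map \<phi> (zlen X) m"
    and V: "zigzag_map D (lift_zig D X \<phi> m) Y u r s"
  shows "Cmp (Zcat D) (AZig (lift_zig D X \<phi> m) Y u r s) (lift_map D X \<phi> m) =
     AZig X Y (map (\<lambda>j. u ! j) \<phi>) r (map (\<lambda>j. s ! j) \<phi>)"
proof -
  interpret strict_mono_map \<phi> "zlen X" m by fact
  note v = zigzag_mapD[OF V, unfolded lift_zig_simps(1)]
    and L = lift_zig_simps[where D = D and X = X and \<phi> = \<phi> and m = m]
  have "map (\<lambda>i. Cmp D (r ! i) (map (Idt D) (zregs (lift_zig D X \<phi> m)) ! hat u i))
    [0..<Suc (zlen Y)] = r"
  proof (rule nth_equalityI)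
    fix i assume "i < length
      (map (\<lambda>i. Cmp D (r ! i) (map (Idt D) (zregs (lift_zig D X \<phi> m)) ! hat u i))
      [0..<Suc (zlen Y)])"
    then have i: "i \<le> zlen Y" by simp
    show "map (\<lambda>i. Cmp D (r ! i) (map (Idt D) (zregs (lift_zig D X \<phi> m)) ! hat u i))
      [0..<Suc (zlen Y)] ! i = r ! i"
      using i hat_le[OF v(3)] L(2,3) comp_id_right[OF v(6)[OF i]]
      by (simp del: upt_Suc add: nth_map_upt less_Suc_eq_le)
  qed (simp add: v(4))
  moreover have "map (\<lambda>j. Cmp D (s ! (\<phi> ! j)) (map (Idt D) (zsings X) ! j)) [0..<length \<phi>] =
      map (\<lambda>j. s ! j) \<phi>"
  proof (rule nth_equalityI)
    fix j assume "j < length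
      (map (\<lambda>j. Cmp D (s ! (\<phi> ! j)) (map (Idt D) (zsings X) ! j)) [0..<length \<phi>])"
    then have j: "j < zlen X" using length_eq by simp
    have "in_hom D (zsings X ! j) (zsings Y ! (u ! (\<phi> ! j))) (s ! (\<phi> ! j))"
      using v(7)[OF mono_map_less[OF mono_map j]] L(4) mono_map_less[OF mono_map j]
        nth_in_set[OF j] hat_nth[OF j]
      by simp
    then show "map (\<lambda>j. Cmp D (s ! (\<phi> ! j)) (map (Idt D) (zsings X) ! j)) [0..<length \<phi>] ! j =
        map (\<lambda>j. s ! j) \<phi> ! j"
      using j length_eq is_zigD(3)[OF X] comp_id_right by simp
  qed simp
  ultimately show ?thesis unfolding Zcat_simps lift_map_def by simp
qed

text \<open>Outside the image of \<open>\<phi>\<close> the lift has identity legs, so a singular slice there is forced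
  by the next one to the right of the same fibre of \<open>u\<close>, or by the backward square if it is
  the last one in the fibre.\<close>
lemma lift_factor_unique:
  assumes X: "is_zig D X" and \<phi>: "strict_mono_map \<phi> (zlen X) m"
    and V1: "zigzag_map D (lift_zig D X \<phi> m) Y u r s1"
    and V2: "zigzag_map D (lift_zig D X \<phi> m) Y u r s2"
    and eq: "map (\<lambda>j. s1 ! j) \<phi> = map (\<lambda>j. s2 ! j) \<phi>"
  shows "s1 = s2"
proof -
  interpret strict_mono_map \<phi> "zlen X" m by fact
  note v1 = zigzag_mapD[OF V1, unfolded lift_zig_simps(1)]
  note v2 = zigzag_mapD[OF V2, unfolded lift_zig_simps(1)]
  have bwd_Idt: "zbwd (lift_zig D X \<phi> m) ! j = Idt D (zsings (lift_zig D X \<phi> m) ! j)"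
    if "j < m" "j \<notin> set \<phi>" for j
    using that by (simp add: lift_zig_simps)
  have "s1 ! j = s2 ! j" if "j < m" for j
    using that
  proof (induction "m - j" arbitrary: j rule: less_induct)
    case less
    show ?case
    proof (cases "j \<in> set \<phi>")
      case True
      then show ?thesis using eq by (auto simp: in_set_conv_nth map_eq_conv)
    next
      case False
      have s1: "Cmp D (s1 ! j) (zbwd (lift_zig D X \<phi> m) ! j) = s1 ! j"
        and s2: "Cmp D (s2 ! j) (zbwd (lift_zig D X \<phi> m) ! j) = s2 ! j"
        using comp_id_right[OF v1(7)[OF less.prems]] comp_id_right[OF v2(7)[OF less.prems]]
          bwd_Idt[OF less.prems False] by simp_all
      show ?thesis
      proof (cases "hat u (Suc (u ! j)) = Suc j")
        case True
        then show ?thesis using v1(9)[OF less.prems True] v2(9)[OF less.prems True] s1 s2 by simp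
      next
        case False
        have Suc_j: "Suc j < m"
          using Suc_le_hat_Suc_nth[OF v1(3) less.prems] hat_le[OF v1(3), of "Suc (u ! j)"] False
          by linarith
        have "u ! j = u ! Suc j"
          using hat_le_iff[OF v1(3) Suc_j, of "Suc (u ! j)"] Suc_le_hat_Suc_nth[OF v1(3) less.prems]
            False mono_mapD[OF v1(3), of j "Suc j"] Suc_j by simp
        then show ?thesis
          using v1(10)[OF Suc_j] v2(10)[OF Suc_j] s1 s2 less.hyps[of "Suc j"] less.prems Suc_j
            by simp
      qed
    qed
  qed
  then show ?thesis using v1(5) v2(5) by (auto intro: nth_equalityI)
qed

end

locale lift_factorization = zigzag_category D + strict_mono_map \<phi> "zlen X" m
  for D :: "('o, 'm) zcat" and X :: "('o, 'm) zob" and \<phi> :: "nat list" and m :: nat +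
  fixes Y :: "('o, 'm) zob" and u :: "nat list" and hr hs :: "('o, 'm) zar list"
  assumes zig: "is_zig D X" and u: "mono_map m (zlen Y) u"
    and map: "zigzag_map D X Y (map (\<lambda>j. u ! j) \<phi>) hr hs"
begin

lemmas h = zigzag_mapD[OF map]
lemmas X = is_zigD[OF zig] and Y = is_zigD[OF h(2)]
  and L = lift_zig_simps[where D = D and X = X and \<phi> = \<phi> and m = m]

lemma u_nth: "k < zlen X \<Longrightarrow> map (\<lambda>j. u ! j) \<phi> ! k = u ! (\<phi> ! k)"
  using length_eq by simp

lemma hat_u: "hat (map (\<lambda>j. u ! j) \<phi>) i = hat \<phi> (hat u i)"
  using hat_comp[OF mono_map u] .

text \<open>At a position \<open>j\<close> outside the image of \<open>\<phi>\<close> the singular slice of the factorization is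
  forced: if the next image position \<open>k = hat \<phi> j\<close> lies in the same fibre of \<open>u\<close>, it factors
  through the forward leg of \<open>X\<close> at \<open>k\<close>, otherwise through the backward leg of \<open>Y\<close>.\<close>
abbreviation next_in_fiber :: "nat \<Rightarrow> bool" where
  "next_in_fiber j \<equiv> hat \<phi> j < zlen X \<and> u ! (\<phi> ! hat \<phi> j) = u ! j"

definition factor_ssl :: "('o, 'm) zar list" where
  "factor_ssl = map (\<lambda>j. if j \<in> set \<phi> then hs ! hat \<phi> j
      else if next_in_fiber j then Cmp D (hs ! hat \<phi> j) (zfwd X ! hat \<phi> j)
      else Cmp D (zbwd Y ! (u ! j)) (hr ! Suc (u ! j))) [0..<m]"

lemma factor_ssl_in:
  "j < m \<Longrightarrow> j \<in> set \<phi> \<Longrightarrow> factor_ssl ! j = hs ! hat \<phi> j"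
  and factor_ssl_next:
  "j < m \<Longrightarrow> j \<notin> set \<phi> \<Longrightarrow> next_in_fiber j \<Longrightarrow>
    factor_ssl ! j = Cmp D (hs ! hat \<phi> j) (zfwd X ! hat \<phi> j)"
  and factor_ssl_not_next:
  "j < m \<Longrightarrow> j \<notin> set \<phi> \<Longrightarrow> \<not> next_in_fiber j \<Longrightarrow>
    factor_ssl ! j = Cmp D (zbwd Y ! (u ! j)) (hr ! Suc (u ! j))"
  unfolding factor_ssl_def by auto

lemma map_factor_ssl: "map (\<lambda>j. factor_ssl ! j) \<phi> = hs"
  using h(5) mono_map_less[OF mono_map] nth_in_set hat_nth length_eq
  by (auto simp: factor_ssl_in intro: nth_equalityI)

lemma hat_Suc_u_not_next:
  assumes j: "j < m" "j \<notin> set \<phi>" "\<not> next_in_fiber j"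
  shows "hat \<phi> (hat u (Suc (u ! j))) = hat \<phi> j"
proof -
  have "hat (map (\<lambda>j. u ! j) \<phi>) (Suc (u ! j)) = hat \<phi> j"
  proof (rule hat_eqI[OF mono_map_comp[OF mono_map u] hat_le[OF mono_map]])
    fix k assume k: "k < zlen X"
    show "hat \<phi> j \<le> k \<longleftrightarrow> Suc (u ! j) \<le> map (\<lambda>j. u ! j) \<phi> ! k"
    proof
      assume le: "hat \<phi> j \<le> k"
      define k0 where "k0 = hat \<phi> j"
      have k0: "k0 < zlen X" using le k unfolding k0_def by simp
      have "j \<le> \<phi> ! k0" using hat_le_iff[OF mono_map k0, of j] unfolding k0_def by simp
      moreover have "\<phi> ! k0 \<noteq> j" using j(2) nth_in_set[OF k0] by auto
      ultimately have "u ! j \<le> u ! (\<phi> ! k0)" using mono_mapD[OF u _ mono_map_less[OF mono_map k0]]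
        by simp
      moreover have "u ! (\<phi> ! k0) \<noteq> u ! j" using j(3) k0 unfolding k0_def by simp
      moreover have "u ! (\<phi> ! k0) \<le> u ! (\<phi> ! k)"
        using mono_mapD[OF u mono_mapD[OF mono_map le[folded k0_def] k]
          mono_map_less[OF mono_map k]] .
      ultimately show "Suc (u ! j) \<le> map (\<lambda>j. u ! j) \<phi> ! k" using u_nth[OF k] by simp
    next
      assume "Suc (u ! j) \<le> map (\<lambda>j. u ! j) \<phi> ! k"
      moreover have "u ! (\<phi> ! k) \<le> u ! j" if "\<phi> ! k \<le> j" using mono_mapD[OF u that j(1)] .
      ultimately show "hat \<phi> j \<le> k" using hat_le_iff[OF mono_map k, of j] u_nth[OF k] by fastforce
    qed
  qed
  then show ?thesis using hat_u by simp
qed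

lemma factor_ssl_in_hom:
  assumes j: "j < m"
  shows "in_hom D (zsings (lift_zig D X \<phi> m) ! j) (zsings Y ! (u ! j)) (factor_ssl ! j)"
proof (cases "j \<in> set \<phi>")
  case True
  then show ?thesis using h(7)[OF hat_less[OF True]] u_nth[OF hat_less[OF True]] nth_hat[OF True]
    by (simp add: j L(4) factor_ssl_in)
next
  case notin: False
  show ?thesis
  proof (cases "next_in_fiber j")
    case True
    then have k: "hat \<phi> j < zlen X" by simp
    show ?thesis
      using in_hom_comp[OF X(8)[OF k] h(7)[OF k]] u_nth[OF k] notin True
      by (simp add: j L(4) factor_ssl_next)
  next
    case False
    have "in_hom D (zregs X ! hat \<phi> j) (zsings Y ! (u ! j))
      (Cmp D (zbwd Y ! (u ! j)) (hr ! Suc (u ! j)))"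
      using in_hom_comp[OF h(6)[of "Suc (u ! j)"] Y(9)] mono_map_less[OF u j] hat_u
        hat_Suc_u_not_next[OF j notin False] by simp
    then show ?thesis using notin False by (simp add: j L(4) factor_ssl_not_next)
  qed
qed

lemma factor_ssl_Idt_right:
  assumes j: "j < m" and notin: "j \<notin> set \<phi>"
  shows "Cmp D (factor_ssl ! j) (zfwd (lift_zig D X \<phi> m) ! j) = factor_ssl ! j"
    and "Cmp D (factor_ssl ! j) (zbwd (lift_zig D X \<phi> m) ! j) = factor_ssl ! j"
proof -
  have "in_hom D (zregs X ! hat \<phi> j) (zsings Y ! (u ! j)) (factor_ssl ! j)"
    using factor_ssl_in_hom[OF j] notin by (simp add: j L(4))
  then show "Cmp D (factor_ssl ! j) (zfwd (lift_zig D X \<phi> m) ! j) = factor_ssl ! j"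
    and "Cmp D (factor_ssl ! j) (zbwd (lift_zig D X \<phi> m) ! j) = factor_ssl ! j"
    using comp_id_right notin by (simp_all add: j L(5,6))
qed

lemma factor_ssl_fwd:
  assumes j: "j < m" and first: "hat u (u ! j) = j"
  shows "Cmp D (factor_ssl ! j) (zfwd (lift_zig D X \<phi> m) ! j) =
    Cmp D (zfwd Y ! (u ! j)) (hr ! (u ! j))"
proof (cases "j \<in> set \<phi>")
  case True
  define k where "k = hat \<phi> j"
  have k: "k < zlen X" "\<phi> ! k = j" using hat_less[OF True] nth_hat[OF True] unfolding k_def .
  have "hat (map (\<lambda>j. u ! j) \<phi>) (map (\<lambda>j. u ! j) \<phi> ! k) = k"
    using first hat_u u_nth[OF k(1)] k unfolding k_def by simp
  then show ?thesis
    using h(8)[OF k(1)] u_nth[OF k(1)] k True by (simp add: j L(5) factor_ssl_in k_def)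
next
  case notin: False
  show ?thesis
  proof (cases "next_in_fiber j")
    case True
    have "hat (map (\<lambda>j. u ! j) \<phi>) (map (\<lambda>j. u ! j) \<phi> ! hat \<phi> j) = hat \<phi> j"
      using first hat_u u_nth True by simp
    then show ?thesis
      using h(8) factor_ssl_Idt_right(1)[OF j notin] factor_ssl_next[OF j notin True] True u_nth
        by simp
  next
    case False
    have "hat (map (\<lambda>j. u ! j) \<phi>) (u ! j) = hat (map (\<lambda>j. u ! j) \<phi>) (Suc (u ! j))"
      using hat_u first hat_Suc_u_not_next[OF j notin False] by simp
    then show ?thesis
      using h(11)[OF mono_map_less[OF u j]] factor_ssl_Idt_right(1)[OF j notin]
        factor_ssl_not_next[OF j notin False] by simp
  qed
qed

lemma factor_ssl_bwd:
  assumes j: "j < m" and last: "hat u (Suc (u ! j)) = Suc j"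
  shows "Cmp D (factor_ssl ! j) (zbwd (lift_zig D X \<phi> m) ! j) =
    Cmp D (zbwd Y ! (u ! j)) (hr ! Suc (u ! j))"
proof (cases "j \<in> set \<phi>")
  case True
  define k where "k = hat \<phi> j"
  have k: "k < zlen X" "\<phi> ! k = j" "hat \<phi> (Suc j) = Suc k"
    using hat_less[OF True] nth_hat[OF True] hat_Suc_in[OF True] unfolding k_def by simp_all
  have "hat (map (\<lambda>j. u ! j) \<phi>) (Suc (map (\<lambda>j. u ! j) \<phi> ! k)) = Suc k"
    using last hat_u u_nth[OF k(1)] k by simp
  then show ?thesis
    using h(9)[OF k(1)] u_nth[OF k(1)] k True by (simp add: j L(6) factor_ssl_in k_def)
next
  case notin: False
  have "\<not> next_in_fiber j"
  proof
    assume nxt: "next_in_fiber j"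
    have "j \<le> \<phi> ! hat \<phi> j" using hat_le_iff[OF mono_map, of "hat \<phi> j" j] nxt by simp
    moreover have "\<phi> ! hat \<phi> j \<noteq> j" using notin nth_in_set[OF conjunct1[OF nxt]] by auto
    ultimately have Suc_j: "Suc j \<le> \<phi> ! hat \<phi> j" by simp
    then have Suc_j_m: "Suc j < m" using mono_map_less[OF mono_map] nxt
      by (meson order.strict_trans1)
    have "u ! Suc j \<le> u ! j" using mono_mapD[OF u Suc_j mono_map_less[OF mono_map]] nxt by simp
    then show False using hat_le_iff[OF u Suc_j_m, of "Suc (u ! j)"] last by simp
  qed
  then show ?thesis using factor_ssl_Idt_right(2)[OF j notin] factor_ssl_not_next[OF j notin]
    by simp
qed

lemma factor_ssl_inner_in:
  assumes in_j: "j \<in> set \<phi>" and j: "Suc j < m" and fiber: "u ! j = u ! Suc j"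
  shows "Cmp D (factor_ssl ! j) (zbwd (lift_zig D X \<phi> m) ! j) =
    Cmp D (factor_ssl ! Suc j) (zfwd (lift_zig D X \<phi> m) ! Suc j)"
proof -
  define k where "k = hat \<phi> j"
  have k: "k < zlen X" "\<phi> ! k = j" "hat \<phi> (Suc j) = Suc k"
    using hat_less[OF in_j] nth_hat[OF in_j] hat_Suc_in[OF in_j] unfolding k_def by simp_all
  have left: "Cmp D (factor_ssl ! j) (zbwd (lift_zig D X \<phi> m) ! j) = Cmp D (hs ! k) (zbwd X ! k)"
    using j in_j by (simp add: L(6) factor_ssl_in k_def)
  show ?thesis
  proof (cases "Suc j \<in> set \<phi>")
    case True
    have "Suc k < zlen X" "\<phi> ! Suc k = Suc j" using hat_less[OF True] nth_hat[OF True] k(3)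
      by simp_all
    then show ?thesis
      using left h(10) True k u_nth fiber j by (simp add: L(5) factor_ssl_in)
  next
    case notin: False
    show ?thesis
    proof (cases "next_in_fiber (Suc j)")
      case True
      then have "Suc k < zlen X" "u ! (\<phi> ! Suc k) = u ! Suc j" using k(3) by simp_all
      then show ?thesis
        using left h(10) factor_ssl_Idt_right(1)[OF j notin] factor_ssl_next[OF j notin True]
          k u_nth fiber by simp
    next
      case False
      have "hat (map (\<lambda>j. u ! j) \<phi>) (Suc (map (\<lambda>j. u ! j) \<phi> ! k)) = Suc k"
        using hat_u u_nth k fiber hat_Suc_u_not_next[OF j notin False] by simp
      then show ?thesis
        using left h(9)[OF k(1)] factor_ssl_Idt_right(1)[OF j notin]
          factor_ssl_not_next[OF j notin False] u_nth k fiber by simp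
    qed
  qed
qed

lemma factor_ssl_inner_notin:
  assumes notin: "j \<notin> set \<phi>" and j: "Suc j < m" and fiber: "u ! j = u ! Suc j"
  shows "Cmp D (factor_ssl ! j) (zbwd (lift_zig D X \<phi> m) ! j) =
    Cmp D (factor_ssl ! Suc j) (zfwd (lift_zig D X \<phi> m) ! Suc j)"
proof -
  have same: "hat \<phi> (Suc j) = hat \<phi> j" by (rule hat_Suc_notin[OF notin])
  have left: "Cmp D (factor_ssl ! j) (zbwd (lift_zig D X \<phi> m) ! j) = factor_ssl ! j"
    using factor_ssl_Idt_right(2) j notin by simp
  show ?thesis
  proof (cases "Suc j \<in> set \<phi>")
    case True
    then have "next_in_fiber j" "\<phi> ! hat \<phi> j = Suc j"
      using hat_less[OF True] nth_hat[OF True] same fiber by simp_all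
    then show ?thesis
      using left factor_ssl_next[of j] notin True same j by (simp add: L(5) factor_ssl_in)
  next
    case False
    have "next_in_fiber j \<longleftrightarrow> next_in_fiber (Suc j)" using same fiber by simp
    then show ?thesis
      using left factor_ssl_Idt_right(1)[OF j False] notin False j factor_ssl_next
        factor_ssl_not_next
      by (cases "next_in_fiber j") (simp_all add: same fiber)
  qed
qed

lemma factor_ssl_inner:
  assumes j: "Suc j < m" and fiber: "u ! j = u ! Suc j"
  shows "Cmp D (factor_ssl ! j) (zbwd (lift_zig D X \<phi> m) ! j) =
    Cmp D (factor_ssl ! Suc j) (zfwd (lift_zig D X \<phi> m) ! Suc j)"
  using factor_ssl_inner_in[OF _ j fiber] factor_ssl_inner_notin[OF _ j fiber] by blast

lemma zigzag_map_factor: "zigzag_map D (lift_zig D X \<phi> m) Y u hr factor_ssl"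
proof (rule zigzag_mapI, unfold L(1))
  show "is_zig D (lift_zig D X \<phi> m)" "is_zig D Y" "mono_map m (zlen Y) u" "length hr = Suc (zlen Y)"
    "length factor_ssl = m"
    using is_zig_lift_zig[OF zig] strict_mono_map_axioms h(2,4) u by (simp_all add: factor_ssl_def)
  show "in_hom D (zregs (lift_zig D X \<phi> m) ! hat u i) (zregs Y ! i) (hr ! i)" if "i \<le> zlen Y" for i
    using h(6)[OF that] hat_u L(3)[OF hat_le[OF u]] by simp
  show "\<And>i. i < zlen Y \<Longrightarrow> hat u i = hat u (Suc i) \<Longrightarrow>
      Cmp D (zfwd Y ! i) (hr ! i) = Cmp D (zbwd Y ! i) (hr ! Suc i)"
    using h(11) hat_u by simp
qed (use factor_ssl_in_hom factor_ssl_fwd factor_ssl_bwd factor_ssl_inner in auto)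

end

lemma in_hom_Zcat_iff: "in_hom (Zcat D) X Y f \<longleftrightarrow> is_zmap D f \<and> zsrc f = X \<and> ztgt f = Y"
  by (simp add: in_hom_def Zcat_simps)

lemma pi_cocartesianI:
  assumes "is_zmap D f"
    and "\<And>h u. is_zmap D h \<Longrightarrow> zsrc h = zsrc f \<Longrightarrow> mono_map (zlen (ztgt f)) (zlen (ztgt h)) u \<Longrightarrow>
      map (\<lambda>j. u ! j) (zfs f) = zfs h \<Longrightarrow>
      \<exists>!v. in_hom (Zcat D) (ztgt f) (ztgt h) v \<and> Cmp (Zcat D) v f = h \<and> zfs v = u"
  shows "pi_cocartesian (Zcat D) f"
  using assms unfolding pi_cocartesian_def in_hom_Zcat_iff by (simp add: Zcat_simps(2-4))

lemma pi_cocartesianD: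
  assumes "pi_cocartesian (Zcat D) f"
  shows "is_zmap D f"
    and "is_zmap D h \<Longrightarrow> zsrc h = zsrc f \<Longrightarrow> mono_map (zlen (ztgt f)) (zlen (ztgt h)) u \<Longrightarrow>
      map (\<lambda>j. u ! j) (zfs f) = zfs h \<Longrightarrow>
      \<exists>!v. in_hom (Zcat D) (ztgt f) (ztgt h) v \<and> Cmp (Zcat D) v f = h \<and> zfs v = u"
  using assms unfolding pi_cocartesian_def in_hom_Zcat_iff by (simp_all add: Zcat_simps(2-4))

context zigzag_category
begin

sublocale Z: category "Zcat D"
  by unfold_locales (rule is_category_Zcat)

lemma lift_map_cocartesian:
  assumes X: "is_zig D X" and \<phi>: "strict_mono_map \<phi> (zlen X) m"
  shows "pi_cocartesian (Zcat D) (lift_map D X \<phi> m)"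
proof (rule pi_cocartesianI[OF is_zmap_lift_map[OF X \<phi>]], unfold lift_map_simps lift_zig_simps(1))
  fix h u assume h: "is_zmap D h" "zsrc h = X" and u: "mono_map m (zlen (ztgt h)) u"
    and fs: "map (\<lambda>j. u ! j) \<phi> = zfs h"
  have H: "zigzag_map D X (ztgt h) (map (\<lambda>j. u ! j) \<phi>) (zrsl h) (zssl h)"
    using is_zmapD(2)[OF h(1)] h(2) fs by simp
  have h_eq: "h = AZig X (ztgt h) (map (\<lambda>j. u ! j) \<phi>) (zrsl h) (zssl h)"
    using is_zmapD(1)[OF h(1)] h(2) fs by simp
  interpret F: lift_factorization D X \<phi> m "ztgt h" u "zrsl h" "zssl h"
    using \<phi> X u H by (intro lift_factorization.intro; unfold_locales)
      (auto simp: strict_mono_map_def)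
  let ?v = "AZig (lift_zig D X \<phi> m) (ztgt h) u (zrsl h) F.factor_ssl"
  show "\<exists>!v. in_hom (Zcat D) (lift_zig D X \<phi> m) (ztgt h) v \<and> Cmp (Zcat D) v (lift_map D X \<phi> m) = h
    \<and> zfs v = u"
  proof (rule ex1I[of _ ?v])
    show "in_hom (Zcat D) (lift_zig D X \<phi> m) (ztgt h) ?v \<and> Cmp (Zcat D) ?v (lift_map D X \<phi> m) = h
      \<and> zfs ?v = u"
      using F.zigzag_map_factor Cmp_lift_map[OF X \<phi> F.zigzag_map_factor] F.map_factor_ssl h_eq
      by (simp add: in_hom_Zcat_iff is_zmap_iff)
  next
    fix v assume v: "in_hom (Zcat D) (lift_zig D X \<phi> m) (ztgt h) v \<and>
      Cmp (Zcat D) v (lift_map D X \<phi> m) = h \<and> zfs v = u"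
    have V: "zigzag_map D (lift_zig D X \<phi> m) (ztgt h) u (zrsl v) (zssl v)"
      and v_eq: "v = AZig (lift_zig D X \<phi> m) (ztgt h) u (zrsl v) (zssl v)"
      using is_zmapD[of D v] v by (auto simp: in_hom_Zcat_iff)
    have "zrsl v = zrsl h" and sv: "map (\<lambda>j. zssl v ! j) \<phi> = zssl h"
      using Cmp_lift_map[OF X \<phi> V] v v_eq h_eq by (metis zar.inject(2))+
    moreover have "zssl v = F.factor_ssl"
      by (rule lift_factor_unique[OF X \<phi> V[unfolded \<open>zrsl v = zrsl h\<close>] F.zigzag_map_factor])
        (simp add: sv F.map_factor_ssl)
    ultimately show "v = ?v" using v_eq by simp
  qed
qed

lemma pi_cocartesian_iso:
  assumes s: "pi_cocartesian (Zcat D) s" and s': "pi_cocartesian (Zcat D) s'"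
    and src: "zsrc s' = zsrc s" and fs: "zfs s' = zfs s" and len: "zlen (ztgt s') = zlen (ztgt s)"
  obtains t where "is_iso (Zcat D) t" "in_hom (Zcat D) (ztgt s) (ztgt s') t" "Cmp (Zcat D) t s = s'"
    "zfs t = [0..<zlen (ztgt s)]"
proof -
  let ?m = "zlen (ztgt s)"
  have sz: "is_zmap D s" and s'z: "is_zmap D s'" using pi_cocartesianD(1) s s' by blast+
  have ms: "mono_map (zlen (zsrc s)) ?m (zfs s)" using zigzag_mapD(3)[OF is_zmapD(2)[OF sz]] .
  have id_fs: "map (\<lambda>j. [0..<?m] ! j) (zfs s) = zfs s" using map_nth_upt_mono_map[OF ms] .
  have id_id: "map (\<lambda>j. [0..<?m] ! j) [0..<?m] = [0..<?m]"
    using map_nth_upt_mono_map[OF mono_map_id] .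
  have hs: "in_hom (Zcat D) (zsrc s) (ztgt s) s" and hs': "in_hom (Zcat D) (zsrc s) (ztgt s') s'"
    using sz s'z src by (simp_all add: in_hom_Zcat_iff)
  obtain t where t: "in_hom (Zcat D) (ztgt s) (ztgt s') t" "Cmp (Zcat D) t s = s'"
    "zfs t = [0..<?m]"
    using pi_cocartesianD(2)[OF s s'z src, of "[0..<?m]"] mono_map_id[of ?m] id_fs fs len by auto
  obtain t' where t': "in_hom (Zcat D) (ztgt s') (ztgt s) t'" "Cmp (Zcat D) t' s' = s"
    "zfs t' = [0..<?m]"
    using pi_cocartesianD(2)[OF s' sz src[symmetric], of "[0..<?m]"] mono_map_id[of ?m] id_fs fs
      len by auto
  have endo_id: "v = Idt (Zcat D) (ztgt r)"
    if r: "pi_cocartesian (Zcat D) r" "zfs r = zfs s" "zlen (ztgt r) = ?m"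
      and v: "in_hom (Zcat D) (ztgt r) (ztgt r) v" "Cmp (Zcat D) v r = r" "zfs v = [0..<?m]" for r v
  proof -
    have rz: "is_zmap D r" using pi_cocartesianD(1)[OF r(1)] .
    have hr: "in_hom (Zcat D) (zsrc r) (ztgt r) r" using rz by (simp add: in_hom_Zcat_iff)
    have "\<exists>!w. in_hom (Zcat D) (ztgt r) (ztgt r) w \<and> Cmp (Zcat D) w r = r \<and> zfs w = [0..<?m]"
      using pi_cocartesianD(2)[OF r(1) rz refl, of "[0..<?m]"] mono_map_id[of ?m] id_fs r(2,3)
        by simp
    moreover have "in_hom (Zcat D) (ztgt r) (ztgt r) (Idt (Zcat D) (ztgt r))"
      using Z.in_hom_id Z.in_hom_objs[OF hr] by blast
    moreover have "Cmp (Zcat D) (Idt (Zcat D) (ztgt r)) r = r" by (rule Z.comp_id_left[OF hr])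
    moreover have "zfs (Idt (Zcat D) (ztgt r)) = [0..<?m]" using r(3) by (simp add: Cmp_Zcat_simps)
    ultimately show ?thesis using v by blast
  qed
  have "Cmp (Zcat D) (Cmp (Zcat D) t' t) s = s"
    using Z.comp_assoc[OF hs t(1) t'(1)] t(2) t'(2) by simp
  moreover have "zfs (Cmp (Zcat D) t' t) = [0..<?m]" using t(3) t'(3) id_id
    by (simp add: Cmp_Zcat_simps)
  ultimately have left: "Cmp (Zcat D) t' t = Idt (Zcat D) (ztgt s)"
    using endo_id[OF s refl refl Z.in_hom_comp[OF t(1) t'(1)]] by blast
  have "Cmp (Zcat D) (Cmp (Zcat D) t t') s' = s'"
    using Z.comp_assoc[OF hs' t'(1) t(1)] t(2) t'(2) by simp
  moreover have "zfs (Cmp (Zcat D) t t') = [0..<?m]" using t(3) t'(3) id_id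
    by (simp add: Cmp_Zcat_simps)
  ultimately have right: "Cmp (Zcat D) t t' = Idt (Zcat D) (ztgt s')"
    using endo_id[OF s' fs len Z.in_hom_comp[OF t'(1) t(1)]] by blast
  have "is_iso (Zcat D) t" using Z.is_isoI[OF t(1) t'(1) left right] .
  then show ?thesis using that t by blast
qed

end

lemma le_nth_if_left_inverse:
  assumes a: "mono_map n m a" and inv: "\<And>j. j < n \<Longrightarrow> b ! (a ! j) = j" and "j < n"
  shows "j \<le> a ! j"
  using \<open>j < n\<close>
proof (induction j)
  case (Suc j)
  have "a ! j \<le> a ! Suc j" using mono_mapD[OF a, of j "Suc j"] Suc.prems by simp
  moreover have "a ! j \<noteq> a ! Suc j" using inv[of j] inv[of "Suc j"] Suc.prems by auto
  ultimately show ?case using Suc by simp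
qed simp

lemma mono_map_inverse_eq_id:
  assumes a: "mono_map n m a" and b: "mono_map m n b"
    and ba: "map (\<lambda>j. b ! j) a = [0..<n]" and ab: "map (\<lambda>j. a ! j) b = [0..<m]"
  shows "m = n" and "a = [0..<n]"
proof -
  have ba': "b ! (a ! j) = j" if "j < n" for j
    using arg_cong[OF ba, of "\<lambda>l. l ! j"] that mono_map_length[OF a] by simp
  have ab': "a ! (b ! j) = j" if "j < m" for j
    using arg_cong[OF ab, of "\<lambda>l. l ! j"] that mono_map_length[OF b] by simp
  have a_id: "a ! j = j" if "j < n" for j
    using le_nth_if_left_inverse[OF a ba' that]
      le_nth_if_left_inverse[OF b ab' mono_map_less[OF a that]]
      ba'[OF that] by simp
  have b_id: "b ! j = j" if "j < m" for j
    using le_nth_if_left_inverse[OF b ab' that]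
      le_nth_if_left_inverse[OF a ba' mono_map_less[OF b that]]
      ab'[OF that] by simp
  have "\<not> m < n" using mono_map_less[OF a, of m] a_id[of m] by auto
  moreover have "\<not> n < m" using mono_map_less[OF b, of n] b_id[of n] by auto
  ultimately show "m = n" by simp
  show "a = [0..<n]" using a_id mono_map_length[OF a] by (auto intro: nth_equalityI)
qed

context zigzag_category
begin

lemma iso_Zcat_vertical:
  assumes t: "is_iso (Zcat D) t"
  obtains t' where "pi_vertical t" "pi_vertical t'"
    "in_hom (Zcat D) (zsrc t) (ztgt t) t" "in_hom (Zcat D) (ztgt t) (zsrc t) t'"
    "Cmp (Zcat D) t' t = Idt (Zcat D) (zsrc t)" "Cmp (Zcat D) t t' = Idt (Zcat D) (ztgt t)"
proof -
  obtain t' where ht: "in_hom (Zcat D) (zsrc t) (ztgt t) t" "in_hom (Zcat D) (ztgt t) (zsrc t) t'"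
    and t't: "Cmp (Zcat D) t' t = Idt (Zcat D) (zsrc t)"
      and tt': "Cmp (Zcat D) t t' = Idt (Zcat D) (ztgt t)"
    using Z.is_isoE[OF t] by (metis Zcat_simps(3,4))
  have a: "mono_map (zlen (zsrc t)) (zlen (ztgt t)) (zfs t)"
    and b: "mono_map (zlen (ztgt t)) (zlen (zsrc t)) (zfs t')"
    using zigzag_mapD(3)[OF is_zmapD(2)[of D t]] zigzag_mapD(3)[OF is_zmapD(2)[of D t']] ht
    by (auto simp: in_hom_Zcat_iff)
  have "map (\<lambda>j. zfs t' ! j) (zfs t) = [0..<zlen (zsrc t)]"
    and "map (\<lambda>j. zfs t ! j) (zfs t') = [0..<zlen (ztgt t)]"
    using arg_cong[OF t't, of zfs] arg_cong[OF tt', of zfs] by (simp_all add: Cmp_Zcat_simps)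
  note inverse = mono_map_inverse_eq_id[OF a b this] mono_map_inverse_eq_id[OF b a this(2,1)]
  show ?thesis
    by (rule that[OF _ _ ht t't tt'])
      (use inverse ht in \<open>simp_all add: pi_vertical_def in_hom_Zcat_iff\<close>)
qed

lemma iso_Zcat_slices:
  assumes t: "is_iso (Zcat D) t"
  shows "\<forall>x\<in>set (zrsl t). is_iso D x" and "\<forall>x\<in>set (zssl t). is_iso D x"
proof -
  obtain t' where v: "pi_vertical t" "pi_vertical t'"
    and ht: "in_hom (Zcat D) (zsrc t) (ztgt t) t" "in_hom (Zcat D) (ztgt t) (zsrc t) t'"
    and t't: "Cmp (Zcat D) t' t = Idt (Zcat D) (zsrc t)"
      and tt': "Cmp (Zcat D) t t' = Idt (Zcat D) (ztgt t)"
    using iso_Zcat_vertical[OF t] by blast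
  define n where "n = zlen (zsrc t)"
  have fs: "zfs t = [0..<n]" "zfs t' = [0..<n]" "zlen (ztgt t) = n"
    using v ht unfolding pi_vertical_def n_def by (auto simp: in_hom_Zcat_iff)
  note f = zigzag_mapD[OF is_zmapD(2)[of D t]] and f' = zigzag_mapD[OF is_zmapD(2)[of D t']]
  have z: "is_zmap D t" "is_zmap D t'" using ht by (simp_all add: in_hom_Zcat_iff)
  have lens: "length (zregs (zsrc t)) = Suc n" "length (zregs (ztgt t)) = Suc n"
    "length (zsings (zsrc t)) = n" "length (zsings (ztgt t)) = n"
    using is_zigD(2,3)[OF f(1)[OF z(1)]] is_zigD(2,3)[OF f(2)[OF z(1)]] fs(3) unfolding n_def
      by simp_all
  have st': "zsrc t' = ztgt t" "ztgt t' = zsrc t" using ht(2) by (simp_all add: in_hom_Zcat_iff)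
  show "\<forall>x\<in>set (zrsl t). is_iso D x"
  proof
    fix x assume "x \<in> set (zrsl t)"
    then obtain i where i: "i \<le> n" "x = zrsl t ! i"
      using f(4)[OF z(1)] fs(3) by (auto simp: in_set_conv_nth less_Suc_eq_le)
    have "in_hom D (zregs (zsrc t) ! i) (zregs (ztgt t) ! i) x"
      "in_hom D (zregs (ztgt t) ! i) (zregs (zsrc t) ! i) (zrsl t' ! i)"
      using f(6)[OF z(1), of i] f'(6)[OF z(2), of i] fs st' i hat_id[OF i(1)] unfolding n_def
        by simp_all
    moreover have "Cmp D (zrsl t' ! i) x = Idt D (zregs (zsrc t) ! i)"
      "Cmp D x (zrsl t' ! i) = Idt D (zregs (ztgt t) ! i)"
      using arg_cong[OF t't, of "\<lambda>f. zrsl f ! i"] arg_cong[OF tt', of "\<lambda>f. zrsl f ! i"] i fs st'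
        lens
        hat_id[OF i(1)]
      by (simp_all add: Zcat_simps n_def del: upt_Suc add: nth_map_upt less_Suc_eq_le)
    ultimately show "is_iso D x" by (rule is_isoI)
  qed
  show "\<forall>x\<in>set (zssl t). is_iso D x"
  proof
    fix x assume "x \<in> set (zssl t)"
    then obtain j where j: "j < n" "x = zssl t ! j"
      using f(5)[OF z(1)] by (auto simp: in_set_conv_nth n_def)
    have "in_hom D (zsings (zsrc t) ! j) (zsings (ztgt t) ! j) x"
      "in_hom D (zsings (ztgt t) ! j) (zsings (zsrc t) ! j) (zssl t' ! j)"
      using f(7)[OF z(1), of j] f'(7)[OF z(2), of j] fs st' j unfolding n_def by simp_all
    moreover have "Cmp D (zssl t' ! j) x = Idt D (zsings (zsrc t) ! j)"
      "Cmp D x (zssl t' ! j) = Idt D (zsings (ztgt t) ! j)"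
      using arg_cong[OF t't, of "\<lambda>f. zssl f ! j"] arg_cong[OF tt', of "\<lambda>f. zssl f ! j"] j fs st'
        lens
      by (simp_all add: Zcat_simps)
    ultimately show "is_iso D x" by (rule is_isoI)
  qed
qed

lemma iso_parallel_degen_in:
  assumes "is_iso (Zcat D) t" and "\<And>x. is_iso D x \<Longrightarrow> x \<in> S"
  shows "parallel_degen_in (Zcat D) S t"
  using iso_Zcat_vertical[OF assms(1)] iso_Zcat_slices[OF assms(1)] assms
  unfolding parallel_degen_in_def is_iso_def by blast

lemma parallel_degen_in_Cmp:
  assumes p: "parallel_degen_in (Zcat D) S p" and q: "parallel_degen_in (Zcat D) S q"
    and pq: "ztgt p = zsrc q"
    and S: "\<And>x y. x \<in> S \<Longrightarrow> y \<in> S \<Longrightarrow> Cod D x = Dom D y \<Longrightarrow> Cmp D y x \<in> S"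
  shows "parallel_degen_in (Zcat D) S (Cmp (Zcat D) q p)"
proof -
  have pz: "is_zmap D p" and qz: "is_zmap D q" and "pi_vertical p" "pi_vertical q"
    using p q unfolding parallel_degen_in_def by (auto simp: Zcat_simps)
  define n where "n = zlen (zsrc p)"
  then have fs: "zfs p = [0..<n]" "zlen (ztgt p) = n" "zfs q = [0..<n]" "zlen (ztgt q) = n"
    using \<open>pi_vertical p\<close> \<open>pi_vertical q\<close> pq unfolding pi_vertical_def by auto
  note f = zigzag_mapD[OF is_zmapD(2)[OF pz]] and g = zigzag_mapD[OF is_zmapD(2)[OF qz]]
  have "set (zrsl (Cmp (Zcat D) q p)) \<subseteq> S"
  proof
    fix x assume "x \<in> set (zrsl (Cmp (Zcat D) q p))"
    then obtain i where i: "i \<le> n" "x = Cmp D (zrsl q ! i) (zrsl p ! i)"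
      using fs hat_id by (auto simp: Zcat_simps less_Suc_eq_le simp del: upt_Suc)
    have "zrsl p ! i \<in> S" "zrsl q ! i \<in> S"
      using p q i(1) f(4) g(4) fs unfolding parallel_degen_in_def by (auto simp: less_Suc_eq_le)
    moreover have "Cod D (zrsl p ! i) = Dom D (zrsl q ! i)"
      using f(6)[of i] g(6)[of i] i(1) fs pq hat_id[OF i(1)] unfolding in_hom_def by simp
    ultimately show "x \<in> S" using S i(2) by simp
  qed
  moreover have "set (zssl (Cmp (Zcat D) q p)) \<subseteq> S"
  proof
    fix x assume "x \<in> set (zssl (Cmp (Zcat D) q p))"
    then obtain j where j: "j < n" "x = Cmp D (zssl q ! j) (zssl p ! j)"
      using fs by (auto simp: Zcat_simps)
    have "zssl p ! j \<in> S" "zssl q ! j \<in> S"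
      using p q j(1) f(5) g(5) fs pq unfolding parallel_degen_in_def n_def by auto
    moreover have "Cod D (zssl p ! j) = Dom D (zssl q ! j)"
      using f(7)[of j] g(7)[of j] j(1) fs pq unfolding in_hom_def n_def by simp
    ultimately show "x \<in> S" using S j(2) by simp
  qed
  moreover have "pi_vertical (Cmp (Zcat D) q p)"
    using fs map_nth_upt_mono_map[OF mono_map_id[of n]] unfolding pi_vertical_def n_def
    by (simp add: Cmp_Zcat_simps)
  ultimately show ?thesis
    using is_zmap_Cmp[OF pz qz pq] unfolding parallel_degen_in_def by (simp add: Zcat_simps(2))
qed

end

context zigzag_category
begin

lemma pi_cocartesian_Idt:
  assumes X: "is_zig D X"
  shows "pi_cocartesian (Zcat D) (Idt (Zcat D) X)"
proof (rule pi_cocartesianI[OF is_zmap_Idt[OF X]], unfold Cmp_Zcat_simps)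
  fix h u assume h: "is_zmap D h" "zsrc h = X" and u: "mono_map (zlen X) (zlen (ztgt h)) u"
    and fs: "map (\<lambda>j. u ! j) [0..<zlen X] = zfs h"
  have "u = zfs h" using map_nth[of u] mono_map_length[OF u] fs by simp
  moreover have "Cmp (Zcat D) v (Idt (Zcat D) X) = v" if "in_hom (Zcat D) X (ztgt h) v" for v
    using Z.comp_id_right[OF that] .
  ultimately show "\<exists>!v. in_hom (Zcat D) X (ztgt h) v \<and> Cmp (Zcat D) v (Idt (Zcat D) X) = h \<and> zfs v
    = u"
    using h by (auto simp: in_hom_Zcat_iff)
qed

lemma pi_cocartesian_Cmp:
  assumes f: "pi_cocartesian (Zcat D) f" and g: "pi_cocartesian (Zcat D) g"
    and fg: "ztgt f = zsrc g"
  shows "pi_cocartesian (Zcat D) (Cmp (Zcat D) g f)"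
proof -
  have fz: "is_zmap D f" and gz: "is_zmap D g" using pi_cocartesianD(1) f g by blast+
  have hf: "in_hom (Zcat D) (zsrc f) (ztgt f) f" and hg: "in_hom (Zcat D) (ztgt f) (ztgt g) g"
    using fz gz fg by (simp_all add: in_hom_Zcat_iff)
  have mf: "mono_map (zlen (zsrc f)) (zlen (ztgt f)) (zfs f)"
    and mg: "mono_map (zlen (ztgt f)) (zlen (ztgt g)) (zfs g)"
    using zigzag_mapD(3)[OF is_zmapD(2)[OF fz]] zigzag_mapD(3)[OF is_zmapD(2)[OF gz]] fg by simp_all
  show ?thesis
  proof (rule pi_cocartesianI, unfold Cmp_Zcat_simps)
    show "is_zmap D (Cmp (Zcat D) g f)" using is_zmap_Cmp[OF fz gz fg] .
    fix h u assume h: "is_zmap D h" "zsrc h = zsrc f"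
      and u: "mono_map (zlen (ztgt g)) (zlen (ztgt h)) u"
      and fs: "map (\<lambda>j. u ! j) (map (\<lambda>j. zfs g ! j) (zfs f)) = zfs h"
    let ?w = "map (\<lambda>j. u ! j) (zfs g)"
    have mw: "mono_map (zlen (ztgt f)) (zlen (ztgt h)) ?w" using mono_map_comp[OF mg u] .
    have "map (\<lambda>j. ?w ! j) (zfs f) = map (\<lambda>j. u ! j) (map (\<lambda>j. zfs g ! j) (zfs f))"
      by (rule nth_equalityI)
        (use mono_map_less[OF mf] mono_map_length[OF mf] mono_map_length[OF mg] in auto)
    from this fs have wf: "map (\<lambda>j. ?w ! j) (zfs f) = zfs h" by (rule trans)
    note lift_f = pi_cocartesianD(2)[OF f h mw wf]
    obtain w where w: "in_hom (Zcat D) (ztgt f) (ztgt h) w" "Cmp (Zcat D) w f = h" "zfs w = ?w"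
      using lift_f by blast
    have wz: "is_zmap D w" "zsrc w = zsrc g" using w(1) fg by (simp_all add: in_hom_Zcat_iff)
    have lift_g: "\<exists>!v. in_hom (Zcat D) (ztgt g) (ztgt h) v \<and> Cmp (Zcat D) v g = w \<and> zfs v = u"
      using pi_cocartesianD(2)[OF g wz, of u] u w(1,3) by (simp add: in_hom_Zcat_iff)
    then obtain v where v: "in_hom (Zcat D) (ztgt g) (ztgt h) v" "Cmp (Zcat D) v g = w" "zfs v = u"
      by blast
    show "\<exists>!v. in_hom (Zcat D) (ztgt g) (ztgt h) v \<and> Cmp (Zcat D) v (Cmp (Zcat D) g f) = h \<and> zfs v
      = u"
    proof (rule ex1I[of _ v])
      show "in_hom (Zcat D) (ztgt g) (ztgt h) v \<and> Cmp (Zcat D) v (Cmp (Zcat D) g f) = h \<and> zfs v = u"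
        using v w(2) Z.comp_assoc[OF hf hg v(1)] by simp
    next
      fix v' assume v': "in_hom (Zcat D) (ztgt g) (ztgt h) v' \<and> Cmp (Zcat D) v' (Cmp (Zcat D) g f)
        = h \<and> zfs v' = u"
      have "in_hom (Zcat D) (ztgt f) (ztgt h) (Cmp (Zcat D) v' g)" "Cmp (Zcat D)
        (Cmp (Zcat D) v' g) f = h"
        "zfs (Cmp (Zcat D) v' g) = ?w"
        using Z.in_hom_comp[OF hg] Z.comp_assoc[OF hf hg] v' by (auto simp: Cmp_Zcat_simps)
      then have "Cmp (Zcat D) v' g = w" using lift_f w by blast
      then show "v' = v" using lift_g v v' by blast
    qed
  qed
qed

end

context zigzag_category
begin

lemma simple_degen_iso_lift:
  assumes s: "pi_cocartesian (Zcat D) s" and distinct: "distinct (zfs s)"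
  obtains t where "is_iso (Zcat D) t"
    "in_hom (Zcat D) (lift_zig D (zsrc s) (zfs s) (zlen (ztgt s))) (ztgt s) t"
    "Cmp (Zcat D) t (lift_map D (zsrc s) (zfs s) (zlen (ztgt s))) = s"
proof -
  have sz: "is_zmap D s" using pi_cocartesianD(1)[OF s] .
  note f = zigzag_mapD[OF is_zmapD(2)[OF sz]]
  have \<phi>: "strict_mono_map (zfs s) (zlen (zsrc s)) (zlen (ztgt s))"
    using f(3) distinct by unfold_locales
  show ?thesis
    by (rule pi_cocartesian_iso[OF lift_map_cocartesian[OF f(1) \<phi>] s])
      (use that in \<open>simp_all add: lift_map_simps lift_zig_simps(1)\<close>)
qed

lemma simple_parallel_factorization_unique:
  assumes s: "pi_cocartesian (Zcat D) s" and s': "pi_cocartesian (Zcat D) s'"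
    and p: "is_zmap D p" "pi_vertical p" and p': "is_zmap D p'" "pi_vertical p'"
    and sp: "ztgt s = zsrc p" and sp': "ztgt s' = zsrc p'"
    and eq: "Cmp (Zcat D) p s = Cmp (Zcat D) p' s'"
  obtains t where "is_iso (Zcat D) t" "in_hom (Zcat D) (ztgt s) (ztgt s') t"
    "Cmp (Zcat D) t s = s'" "Cmp (Zcat D) p' t = p"
proof -
  have sz: "is_zmap D s" and s'z: "is_zmap D s'" using pi_cocartesianD(1) s s' by blast+
  let ?m = "zlen (ztgt s)"
  have src: "zsrc s' = zsrc s" and tgt: "ztgt p' = ztgt p"
    using arg_cong[OF eq, of zsrc] arg_cong[OF eq, of ztgt] by (simp_all add: Cmp_Zcat_simps)
  have lens: "zlen (ztgt p) = ?m" "zlen (ztgt s') = ?m"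
    and fs: "zfs p = [0..<?m]" "zfs p' = [0..<?m]"
    using p(2) p'(2) sp sp' tgt unfolding pi_vertical_def by auto
  have ms: "mono_map (zlen (zsrc s)) ?m (zfs s)" and ms': "mono_map (zlen (zsrc s')) ?m (zfs s')"
    using zigzag_mapD(3)[OF is_zmapD(2)[OF sz]] zigzag_mapD(3)[OF is_zmapD(2)[OF s'z]] lens
      by simp_all
  have "zfs (Cmp (Zcat D) p s) = zfs s" "zfs (Cmp (Zcat D) p' s') = zfs s'"
    using map_nth_upt_mono_map[OF ms] map_nth_upt_mono_map[OF ms'] fs
      by (simp_all add: Cmp_Zcat_simps)
  then have "zfs s' = zfs s" using eq by simp
  then obtain t where t: "is_iso (Zcat D) t" "in_hom (Zcat D) (ztgt s) (ztgt s') t"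
    "Cmp (Zcat D) t s = s'" "zfs t = [0..<?m]"
    using pi_cocartesian_iso[OF s s' src] lens by metis
  have hs: "in_hom (Zcat D) (zsrc s) (ztgt s) s" using sz by (simp add: in_hom_Zcat_iff)
  have hp: "in_hom (Zcat D) (ztgt s) (ztgt p) p" and hp': "in_hom (Zcat D) (ztgt s') (ztgt p) p'"
    using p(1) p'(1) sp sp' tgt by (simp_all add: in_hom_Zcat_iff)
  have hps: "is_zmap D (Cmp (Zcat D) p s)" using is_zmap_Cmp[OF sz p(1) sp] .
  have "\<exists>!v. in_hom (Zcat D) (ztgt s) (ztgt p) v \<and> Cmp (Zcat D) v s = Cmp (Zcat D) p s \<and>
      zfs v = [0..<?m]"
    using pi_cocartesianD(2)[OF s hps, of "[0..<?m]"] mono_map_id[of ?m]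
      map_nth_upt_mono_map[OF ms] lens
      \<open>zfs (Cmp (Zcat D) p s) = zfs s\<close> by (simp add: Cmp_Zcat_simps)
  moreover have "Cmp (Zcat D) (Cmp (Zcat D) p' t) s = Cmp (Zcat D) p s"
    using Z.comp_assoc[OF hs t(2) hp'] t(3) eq by simp
  moreover have "zfs (Cmp (Zcat D) p' t) = [0..<?m]"
    using t(4) fs map_nth_upt_mono_map[OF mono_map_id[of ?m]] by (simp add: Cmp_Zcat_simps)
  ultimately have "Cmp (Zcat D) p' t = p"
    using Z.in_hom_comp[OF t(2) hp'] hp fs by blast
  then show ?thesis using that t by blast
qed

text \<open>At positions outside the image of \<open>\<phi>\<close> both lifts have identity legs, which forces the
  singular slice of \<open>p'\<close> there to equal its regular slice.\<close>
lemma vertical_lift_swap_slices: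
  assumes p: "is_zmap D p" "pi_vertical p" and \<phi>: "strict_mono_map \<phi> (zlen (ztgt p)) m"
    and p': "in_hom (Zcat D) (lift_zig D (zsrc p) \<phi> m) (lift_zig D (ztgt p) \<phi> m) p'"
      "zfs p' = [0..<m]"
    and swap: "Cmp (Zcat D) p' (lift_map D (zsrc p) \<phi> m) = Cmp (Zcat D) (lift_map D (ztgt p) \<phi> m) p"
  shows "\<And>i. i \<le> m \<Longrightarrow> zrsl p' ! i = zrsl p ! hat \<phi> i"
    and "\<And>k. k < zlen (zsrc p) \<Longrightarrow> zssl p' ! (\<phi> ! k) = zssl p ! k"
    and "\<And>j. j < m \<Longrightarrow> j \<notin> set \<phi> \<Longrightarrow> zssl p' ! j = zrsl p' ! j"
proof -
  let ?A = "zsrc p" and ?B = "ztgt p" and ?n = "zlen (zsrc p)"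
  have nB: "zlen ?B = ?n" and fp: "zfs p = [0..<?n]" using p(2) unfolding pi_vertical_def
    by simp_all
  have \<phi>A: "strict_mono_map \<phi> ?n m" using \<phi> nB by simp
  interpret strict_mono_map \<phi> ?n m by fact
  note f = zigzag_mapD[OF is_zmapD(2)[OF p(1)]]
  have P': "zigzag_map D (lift_zig D ?A \<phi> m) (lift_zig D ?B \<phi> m) [0..<m] (zrsl p') (zssl p')"
    and p'_eq: "p' = AZig (lift_zig D ?A \<phi> m) (lift_zig D ?B \<phi> m) [0..<m] (zrsl p') (zssl p')"
    using is_zmapD[of D p'] p' by (simp_all add: in_hom_Zcat_iff)
  note g = zigzag_mapD[OF P', unfolded lift_zig_simps(1)]
  have h_eq: "AZig ?A (lift_zig D ?B \<phi> m) \<phi> (zrsl p') (map (\<lambda>j. zssl p' ! j) \<phi>) =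
      Cmp (Zcat D) (lift_map D ?B \<phi> m) p"
    using Cmp_lift_map[OF f(1) \<phi>A P'] p'_eq swap map_nth_upt_mono_map[OF mono_map] by simp
  show "zrsl p' ! i = zrsl p ! hat \<phi> i" if "i \<le> m" for i
  proof -
    have "zrsl p' ! i = Cmp D (Idt D (zregs ?B ! hat \<phi> i)) (zrsl p ! hat \<phi> i)"
      using arg_cong[OF h_eq, of "\<lambda>f. zrsl f ! i"] that
      by (simp add: Cmp_Zcat_nth lift_map_def lift_zig_simps)
    also have "\<dots> = zrsl p ! hat \<phi> i"
      using comp_id_left[OF f(6)] hat_le[OF mono_map, of i] fp hat_id[OF hat_le[OF mono_map]] nB
        by simp
    finally show ?thesis .
  qed
  show "zssl p' ! (\<phi> ! k) = zssl p ! k" if "k < ?n" for k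
  proof -
    have "zssl p' ! (\<phi> ! k) = Cmp D (Idt D (zsings ?B ! k)) (zssl p ! k)"
      using arg_cong[OF h_eq, of "\<lambda>f. zssl f ! k"] that length_eq fp is_zigD(3)[OF f(2)] nB
      by (simp add: Cmp_Zcat_nth lift_map_def)
    also have "\<dots> = zssl p ! k" using comp_id_left[OF f(7)[OF that]] fp that by simp
    finally show ?thesis .
  qed
  show "zssl p' ! j = zrsl p' ! j" if j: "j < m" "j \<notin> set \<phi>" for j
  proof -
    have "in_hom D (zregs ?A ! hat \<phi> j) (zregs ?B ! hat \<phi> j) (zssl p' ! j)"
      "in_hom D (zregs ?A ! hat \<phi> j) (zregs ?B ! hat \<phi> j) (zrsl p' ! j)"
      using g(6)[of j] g(7)[OF j(1)] j hat_id[of j m] by (simp_all add: lift_zig_simps)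
    moreover have "Cmp D (zssl p' ! j) (zfwd (lift_zig D ?A \<phi> m) ! j) =
        Cmp D (zfwd (lift_zig D ?B \<phi> m) ! j) (zrsl p' ! j)"
      using g(8)[OF j(1)] hat_id[of j m] j(1) by simp
    ultimately show ?thesis using j comp_id_left comp_id_right by (simp add: lift_zig_simps)
  qed
qed

lemma vertical_lift_swap:
  assumes p: "is_zmap D p" "pi_vertical p" and \<phi>: "strict_mono_map \<phi> (zlen (ztgt p)) m"
  obtains p' where "in_hom (Zcat D) (lift_zig D (zsrc p) \<phi> m) (lift_zig D (ztgt p) \<phi> m) p'"
    "pi_vertical p'"
    "Cmp (Zcat D) p' (lift_map D (zsrc p) \<phi> m) = Cmp (Zcat D) (lift_map D (ztgt p) \<phi> m) p"
    "set (zrsl p') \<subseteq> set (zrsl p)" "set (zssl p') \<subseteq> set (zssl p) \<union> set (zrsl p)"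
proof -
  let ?A = "zsrc p" and ?B = "ztgt p" and ?n = "zlen (zsrc p)"
  have nB: "zlen ?B = ?n" and fp: "zfs p = [0..<?n]" using p(2) unfolding pi_vertical_def
    by simp_all
  have \<phi>A: "strict_mono_map \<phi> ?n m" using \<phi> nB by simp
  interpret strict_mono_map \<phi> ?n m by fact
  note f = zigzag_mapD[OF is_zmapD(2)[OF p(1)]]
  have LB: "is_zmap D (lift_map D ?B \<phi> m)" using is_zmap_lift_map[OF f(2) \<phi>] .
  let ?h = "Cmp (Zcat D) (lift_map D ?B \<phi> m) p"
  have hz: "is_zmap D ?h" using is_zmap_Cmp[OF p(1) LB] by (simp add: lift_map_simps)
  have fh: "zfs ?h = \<phi>" using fp map_nth[of \<phi>]
    by (simp add: Cmp_Zcat_simps lift_map_simps length_eq)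
  obtain p' where p': "in_hom (Zcat D) (lift_zig D ?A \<phi> m) (lift_zig D ?B \<phi> m) p'"
      "Cmp (Zcat D) p' (lift_map D ?A \<phi> m) = ?h" "zfs p' = [0..<m]"
    using pi_cocartesianD(2)[OF lift_map_cocartesian[OF f(1) \<phi>A] hz, of "[0..<m]"] fh
      mono_map_id[of m]
      map_nth_upt_mono_map[OF mono_map]
    by (auto simp: Cmp_Zcat_simps lift_map_simps lift_zig_simps(1) in_hom_Zcat_iff)
  note slices = vertical_lift_swap_slices[OF p \<phi> p'(1,3,2)]
  have lens: "length (zrsl p') = Suc m" "length (zssl p') = m"
    using zigzag_mapD(4,5)[OF is_zmapD(2)[of D p']] p'
      by (auto simp: in_hom_Zcat_iff lift_zig_simps(1))
  have rsl_sub: "set (zrsl p') \<subseteq> set (zrsl p)"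
  proof
    fix x assume "x \<in> set (zrsl p')"
    then obtain i where "i \<le> m" "x = zrsl p' ! i" using lens
      by (auto simp: in_set_conv_nth less_Suc_eq_le)
    then show "x \<in> set (zrsl p)" using slices(1) hat_le[OF mono_map, of i] f(4) nB by simp
  qed
  have "set (zssl p') \<subseteq> set (zssl p) \<union> set (zrsl p)"
  proof
    fix x assume "x \<in> set (zssl p')"
    then obtain j where j: "j < m" "x = zssl p' ! j" using lens by (auto simp: in_set_conv_nth)
    show "x \<in> set (zssl p) \<union> set (zrsl p)"
    proof (cases "j \<in> set \<phi>")
      case True
      then show ?thesis using slices(2)[OF hat_less[OF True]] nth_hat[OF True] hat_less[OF True]
        f(5) j(2)
        by auto
    next
      case False
      then have "x \<in> set (zrsl p')" using slices(3)[OF j(1) False] j lens by simp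
      then show ?thesis using rsl_sub by auto
    qed
  qed
  moreover have "pi_vertical p'"
    using p' by (simp add: pi_vertical_def lift_zig_simps(1) in_hom_Zcat_iff)
  ultimately show ?thesis using that p'(1,2) rsl_sub by (simp add: lift_map_simps)
qed

end

section \<open>Factorization of degeneracy maps\<close>

locale degeneracy_slices = zigzag_category D for D :: "('o, 'm) zcat" +
  fixes S :: "('o, 'm) zar set"
  assumes S_comp: "\<And>x y. x \<in> S \<Longrightarrow> y \<in> S \<Longrightarrow> Cod D x = Dom D y \<Longrightarrow> Cmp D y x \<in> S"
    and iso_in_S: "\<And>x. is_iso D x \<Longrightarrow> x \<in> S"
begin

definition simple_parallel_factorization :: "('o, 'm) zar \<Rightarrow> ('o, 'm) zar \<Rightarrow> ('o, 'm) zar \<Rightarrow> bool"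
  where
  "simple_parallel_factorization f s p \<longleftrightarrow> simple_degen_in (Zcat D) s \<and> parallel_degen_in (Zcat D) S
    p \<and>
     zsrc s = zsrc f \<and> ztgt s = zsrc p \<and> ztgt p = ztgt f \<and> Cmp (Zcat D) p s = f"

lemma parallel_degen_in_is_zmap: "parallel_degen_in (Zcat D) S p \<Longrightarrow> is_zmap D p"
  unfolding parallel_degen_in_def by (simp add: Zcat_simps)

lemma parallel_degen_in_comp:
  "parallel_degen_in (Zcat D) S p \<Longrightarrow> parallel_degen_in (Zcat D) S q \<Longrightarrow> ztgt p = zsrc q \<Longrightarrow>
    parallel_degen_in (Zcat D) S (Cmp (Zcat D) q p)"
  using parallel_degen_in_Cmp S_comp by blast

lemma distinct_map_nth:
  "distinct xs \<Longrightarrow> distinct ys \<Longrightarrow> \<forall>x\<in>set xs. x < length ys \<Longrightarrow> distinct (map (\<lambda>j. ys ! j) xs)"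
  by (induction xs) (auto simp: in_set_conv_nth nth_eq_iff_index_eq)

lemma parallel_simple_commute:
  assumes p: "parallel_degen_in (Zcat D) S p" and s: "simple_degen_in (Zcat D) s"
    and ps: "ztgt p = zsrc s"
  obtains s' q where "simple_degen_in (Zcat D) s'" "parallel_degen_in (Zcat D) S q"
    "zsrc s' = zsrc p" "ztgt s' = zsrc q" "ztgt q = ztgt s" "Cmp (Zcat D) q s' = Cmp (Zcat D) s p"
proof -
  have sc: "pi_cocartesian (Zcat D) s" and sd: "distinct (zfs s)" using s
    unfolding simple_degen_in_def by auto
  have pz: "is_zmap D p" and pv: "pi_vertical p" using p parallel_degen_in_is_zmap
    unfolding parallel_degen_in_def by auto
  have sz: "is_zmap D s" using pi_cocartesianD(1)[OF sc] .
  let ?\<phi> = "zfs s" and ?m = "zlen (ztgt s)" and ?A = "zsrc p"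
  obtain t where t: "is_iso (Zcat D) t" "in_hom (Zcat D) (lift_zig D (ztgt p) ?\<phi> ?m) (ztgt s) t"
    "Cmp (Zcat D) t (lift_map D (ztgt p) ?\<phi> ?m) = s"
    using simple_degen_iso_lift[OF sc sd] ps by metis
  have \<phi>: "strict_mono_map ?\<phi> (zlen (ztgt p)) ?m"
    using zigzag_mapD(3)[OF is_zmapD(2)[OF sz]] sd ps by unfold_locales simp_all
  obtain p' where p': "in_hom (Zcat D) (lift_zig D ?A ?\<phi> ?m) (lift_zig D (ztgt p) ?\<phi> ?m) p'"
    "pi_vertical p'"
    "Cmp (Zcat D) p' (lift_map D ?A ?\<phi> ?m) = Cmp (Zcat D) (lift_map D (ztgt p) ?\<phi> ?m) p"
    "set (zrsl p') \<subseteq> set (zrsl p)" "set (zssl p') \<subseteq> set (zssl p) \<union> set (zrsl p)"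
    using vertical_lift_swap[OF pz pv \<phi>] by blast
  have "zlen ?A = zlen (ztgt p)" using pv unfolding pi_vertical_def by simp
  then have \<phi>A: "strict_mono_map ?\<phi> (zlen ?A) ?m" using \<phi> by simp
  have A: "is_zig D ?A" using zigzag_mapD(1)[OF is_zmapD(2)[OF pz]] .
  have "parallel_degen_in (Zcat D) S p'"
    using p' p unfolding parallel_degen_in_def in_hom_Zcat_iff by (auto simp: Zcat_simps(2))
  then have q: "parallel_degen_in (Zcat D) S (Cmp (Zcat D) t p')"
    using parallel_degen_in_comp iso_parallel_degen_in[OF t(1) iso_in_S] p'(1) t(2)
    by (simp add: in_hom_Zcat_iff)
  have s': "simple_degen_in (Zcat D) (lift_map D ?A ?\<phi> ?m)"
    using lift_map_cocartesian[OF A \<phi>A] sd unfolding simple_degen_in_def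
      by (simp add: lift_map_simps)
  have hL: "in_hom (Zcat D) ?A (lift_zig D ?A ?\<phi> ?m) (lift_map D ?A ?\<phi> ?m)"
    and hLB: "in_hom (Zcat D) (ztgt p) (lift_zig D (ztgt p) ?\<phi> ?m) (lift_map D (ztgt p) ?\<phi> ?m)"
    and hp: "in_hom (Zcat D) ?A (ztgt p) p"
    using is_zmap_lift_map[OF A \<phi>A] is_zmap_lift_map[OF zigzag_mapD(2)[OF is_zmapD(2)[OF pz]] \<phi>] pz
    by (simp_all add: in_hom_Zcat_iff lift_map_simps)
  have "Cmp (Zcat D) (Cmp (Zcat D) t p') (lift_map D ?A ?\<phi> ?m) = Cmp (Zcat D) s p"
    using Z.comp_assoc[OF hL p'(1) t(2)] p'(3) Z.comp_assoc[OF hp hLB t(2)] t(3) by simp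
  then show ?thesis
    using that[OF s' q] p'(1) t(2) by (simp add: in_hom_Zcat_iff lift_map_simps Cmp_Zcat_simps)
qed

lemma simple_parallel_factorization_Cmp:
  assumes f1: "simple_parallel_factorization f1 s1 p1"
    and f2: "simple_parallel_factorization f2 s2 p2"
    and f12: "ztgt f1 = zsrc f2"
    and s': "simple_degen_in (Zcat D) s'" and q: "parallel_degen_in (Zcat D) S q"
    and ends: "zsrc s' = zsrc p1" "ztgt s' = zsrc q" "ztgt q = ztgt s2"
    and swap: "Cmp (Zcat D) q s' = Cmp (Zcat D) s2 p1"
  shows "simple_parallel_factorization (Cmp (Zcat D) f2 f1) (Cmp (Zcat D) s' s1)
    (Cmp (Zcat D) p2 q)"
proof -
  have s1: "pi_cocartesian (Zcat D) s1" "distinct (zfs s1)"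
    and p1: "parallel_degen_in (Zcat D) S p1"
    and s2: "pi_cocartesian (Zcat D) s2" and p2: "parallel_degen_in (Zcat D) S p2"
    and s'c: "pi_cocartesian (Zcat D) s'" "distinct (zfs s')"
    and e1: "zsrc s1 = zsrc f1" "ztgt s1 = zsrc p1" "ztgt p1 = ztgt f1" "Cmp (Zcat D) p1 s1 = f1"
    and e2: "zsrc s2 = zsrc f2" "ztgt s2 = zsrc p2" "ztgt p2 = ztgt f2" "Cmp (Zcat D) p2 s2 = f2"
    using f1 f2 s' unfolding simple_parallel_factorization_def simple_degen_in_def by blast+
  have hs1: "in_hom (Zcat D) (zsrc f1) (zsrc p1) s1"
    and hp1: "in_hom (Zcat D) (zsrc p1) (zsrc f2) p1"
    and hs2: "in_hom (Zcat D) (zsrc f2) (zsrc p2) s2"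
      and hp2: "in_hom (Zcat D) (zsrc p2) (ztgt f2) p2"
    and hs': "in_hom (Zcat D) (zsrc p1) (zsrc q) s'" and hq: "in_hom (Zcat D) (zsrc q) (zsrc p2) q"
    using pi_cocartesianD(1)[OF s1(1)] pi_cocartesianD(1)[OF s2] pi_cocartesianD(1)[OF s'c(1)]
      parallel_degen_in_is_zmap[OF p1] parallel_degen_in_is_zmap[OF p2]
        parallel_degen_in_is_zmap[OF q]
      e1 e2 ends f12
    by (simp_all add: in_hom_Zcat_iff)
  have "pi_cocartesian (Zcat D) (Cmp (Zcat D) s' s1)"
    using pi_cocartesian_Cmp[OF s1(1) s'c(1)] e1 ends by simp
  moreover have "distinct (zfs (Cmp (Zcat D) s' s1))"
  proof -
    have "mono_map (zlen (zsrc f1)) (zlen (zsrc p1)) (zfs s1)"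
      and "length (zfs s') = zlen (zsrc p1)"
      using zigzag_mapD(3)[OF is_zmapD(2)[of D s1]] zigzag_mapD(3)[OF is_zmapD(2)[of D s']] hs1 hs'
        mono_map_length by (auto simp: in_hom_Zcat_iff)
    then show ?thesis using distinct_map_nth[OF s1(2) s'c(2)] mono_map_less mono_map_length
      by (fastforce simp: Cmp_Zcat_simps in_set_conv_nth)
  qed
  moreover have "parallel_degen_in (Zcat D) S (Cmp (Zcat D) p2 q)"
    using parallel_degen_in_comp[OF q p2] ends e2 by simp
  moreover have "Cmp (Zcat D) (Cmp (Zcat D) p2 q) (Cmp (Zcat D) s' s1) = Cmp (Zcat D) f2 f1"
  proof -
    have "Cmp (Zcat D) (Cmp (Zcat D) p2 q) (Cmp (Zcat D) s' s1) = Cmp (Zcat D) p2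
      (Cmp (Zcat D) (Cmp (Zcat D) q s') s1)"
      using Z.comp_assoc[OF Z.in_hom_comp[OF hs1 hs'] hq hp2] Z.comp_assoc[OF hs1 hs' hq] by simp
    also have "\<dots> = Cmp (Zcat D) (Cmp (Zcat D) p2 s2) (Cmp (Zcat D) p1 s1)"
      using swap Z.comp_assoc[OF hs1 hp1 hs2] Z.comp_assoc[OF Z.in_hom_comp[OF hs1 hp1] hs2 hp2]
        by simp
    finally show ?thesis using e1 e2 by simp
  qed
  ultimately show ?thesis
    unfolding simple_parallel_factorization_def simple_degen_in_def using e1 e2 ends
    by (simp add: Cmp_Zcat_simps)
qed

end

context degeneracy_slices
begin

lemma simple_parallel_factorization_simple:
  assumes s: "simple_degen_in (Zcat D) s"
  shows "simple_parallel_factorization s s (Idt (Zcat D) (ztgt s))"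
proof -
  have hs: "in_hom (Zcat D) (zsrc s) (ztgt s) s"
    using pi_cocartesianD(1)[of D s] s unfolding simple_degen_in_def by (simp add: in_hom_Zcat_iff)
  have "is_iso (Zcat D) (Idt (Zcat D) (ztgt s))" using Z.iso_id Z.in_hom_objs[OF hs] by blast
  then show ?thesis
    using s iso_parallel_degen_in[OF _ iso_in_S] Z.comp_id_left[OF hs]
    unfolding simple_parallel_factorization_def by (simp add: Cmp_Zcat_simps)
qed

lemma simple_parallel_factorization_parallel:
  assumes p: "parallel_degen_in (Zcat D) S p"
  shows "simple_parallel_factorization p (Idt (Zcat D) (zsrc p)) p"
proof -
  have pz: "is_zmap D p" using parallel_degen_in_is_zmap[OF p] .
  have "simple_degen_in (Zcat D) (Idt (Zcat D) (zsrc p))"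
    using pi_cocartesian_Idt[OF zigzag_mapD(1)[OF is_zmapD(2)[OF pz]]]
    unfolding simple_degen_in_def by (simp add: Cmp_Zcat_simps)
  then show ?thesis
    using p Z.comp_id_right[of "zsrc p" "ztgt p" p] pz
    unfolding simple_parallel_factorization_def by (simp add: Cmp_Zcat_simps in_hom_Zcat_iff)
qed

lemma comp_closure_factorization:
  assumes "f \<in> comp_closure (Zcat D)
    ({f. simple_degen_in (Zcat D) f} \<union> {f. parallel_degen_in (Zcat D) S f})"
  shows "\<exists>s p. simple_parallel_factorization f s p"
  using assms
proof induction
  case (gen f)
  then show ?case using simple_parallel_factorization_simple
    simple_parallel_factorization_parallel by blast
next
  case (cmp f1 f2)
  obtain s1 p1 s2 p2 where f1: "simple_parallel_factorization f1 s1 p1"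
    and f2: "simple_parallel_factorization f2 s2 p2"
    using cmp.IH by blast
  have f12: "ztgt f1 = zsrc f2" using cmp.hyps(3) by (simp add: Zcat_simps)
  have "parallel_degen_in (Zcat D) S p1" "simple_degen_in (Zcat D) s2" "ztgt p1 = zsrc s2"
    using f1 f2 f12 unfolding simple_parallel_factorization_def by simp_all
  then obtain s' q where "simple_degen_in (Zcat D) s'" "parallel_degen_in (Zcat D) S q"
    "zsrc s' = zsrc p1" "ztgt s' = zsrc q" "ztgt q = ztgt s2" "Cmp (Zcat D) q s' = Cmp (Zcat D) s2
      p1"
    by (rule parallel_simple_commute)
  then show ?case using simple_parallel_factorization_Cmp[OF f1 f2 f12] by blast
qed

end

lemma degen_Cmp:
  assumes "is_category C" and "x \<in> degen C k" "y \<in> degen C k" "Cod (Zn C k) x = Dom (Zn C k) y"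
  shows "Cmp (Zn C k) y x \<in> degen C k"
proof (cases k)
  case 0
  interpret category "Zn C 0" using is_category_Zn[OF assms(1)] by unfold_locales
  show ?thesis using iso_comp assms 0 by simp
qed (use assms comp_closure.cmp in simp)

lemma iso_in_degen:
  assumes "is_category C" and "is_iso (Zn C k) x"
  shows "x \<in> degen C k"
  using assms(2)
proof (induction k arbitrary: x)
  case (Suc k)
  interpret zigzag_category "Zn C k" using is_category_Zn[OF assms(1)] by unfold_locales
  have "parallel_degen_in (Zcat (Zn C k)) (degen C k) x"
    using iso_parallel_degen_in Suc by simp
  then show ?case by (simp add: comp_closure.gen)
qed simp

lemma degeneracy_slices_degen:
  assumes "is_category C"
  shows "degeneracy_slices (Zn C k) (degen C k)"
  using is_category_Zn[OF assms] degen_Cmp[OF assms] iso_in_degen[OF assms]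
  by unfold_locales simp_all

lemma degen_factorization_exists:
  assumes "is_category C" and "f \<in> degen C (Suc k)"
  shows "\<exists>s p. simple_degen C (Suc k) s \<and> parallel_degen C (Suc k) p \<and>
    Dom (Zn C (Suc k)) s = Dom (Zn C (Suc k)) f \<and> Cod (Zn C (Suc k)) s = Dom (Zn C (Suc k)) p \<and>
    Cod (Zn C (Suc k)) p = Cod (Zn C (Suc k)) f \<and> Cmp (Zn C (Suc k)) p s = f"
proof -
  interpret degeneracy_slices "Zn C k" "degen C k" by (rule degeneracy_slices_degen[OF assms(1)])
  show ?thesis
    using comp_closure_factorization assms(2)
    unfolding simple_parallel_factorization_def simple_degen_def parallel_degen_def
    by (simp add: Zcat_simps(3,4))
qed

lemma degen_factorization_unique:
  assumes "is_category C"
    and s: "simple_degen C (Suc k) s" and p: "parallel_degen C (Suc k) p"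
    and s': "simple_degen C (Suc k) s'" and p': "parallel_degen C (Suc k) p'"
    and ends: "Cod (Zn C (Suc k)) s = Dom (Zn C (Suc k)) p" "Cod (Zn C (Suc k)) s' = Dom
      (Zn C (Suc k)) p'"
    and eq: "Cmp (Zn C (Suc k)) p s = f" "Cmp (Zn C (Suc k)) p' s' = f"
  shows "\<exists>\<theta>. is_iso (Zn C (Suc k)) \<theta> \<and> Dom (Zn C (Suc k)) \<theta> = Cod (Zn C (Suc k)) s \<and>
    Cod (Zn C (Suc k)) \<theta> = Cod (Zn C (Suc k)) s' \<and>
    Cmp (Zn C (Suc k)) \<theta> s = s' \<and> Cmp (Zn C (Suc k)) p' \<theta> = p"
proof -
  interpret zigzag_category "Zn C k" using is_category_Zn[OF assms(1)] by unfold_locales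
  have "is_zmap (Zn C k) p" "pi_vertical p" "is_zmap (Zn C k) p'" "pi_vertical p'"
    using p p' unfolding parallel_degen_def parallel_degen_in_def by (auto simp: Zcat_simps)
  moreover have "Cmp (Zcat (Zn C k)) p s = Cmp (Zcat (Zn C k)) p' s'" using eq by simp
  ultimately obtain \<theta> where "is_iso (Zcat (Zn C k)) \<theta>" "in_hom (Zcat (Zn C k)) (ztgt s) (ztgt s') \<theta>"
      "Cmp (Zcat (Zn C k)) \<theta> s = s'" "Cmp (Zcat (Zn C k)) p' \<theta> = p"
    using simple_parallel_factorization_unique[of s s' p p'] s s' ends
    unfolding simple_degen_def simple_degen_in_def by (auto simp: Zcat_simps(3,4))
  then show ?thesis by (auto simp: in_hom_Zcat_iff Zcat_simps(3,4))
qed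

theorem lemma3p5:
  fixes C :: "('o, 'm) cat" and n :: nat and f :: "('o, 'm) zar"
  assumes "is_category C" and "1 \<le> n" and "f \<in> degen C n"
  shows "(\<exists>s p. simple_degen C n s \<and> parallel_degen C n p \<and>
            Dom (Zn C n) s = Dom (Zn C n) f \<and> Cod (Zn C n) s = Dom (Zn C n) p \<and>
            Cod (Zn C n) p = Cod (Zn C n) f \<and> Cmp (Zn C n) p s = f) \<and>
         (\<forall>s p s' p'.
            simple_degen C n s \<and> parallel_degen C n p \<and>
            Cod (Zn C n) s = Dom (Zn C n) p \<and> Cmp (Zn C n) p s = f \<and>
            simple_degen C n s' \<and> parallel_degen C n p' \<and>
            Cod (Zn C n) s' = Dom (Zn C n) p' \<and> Cmp (Zn C n) p' s' = f \<longrightarrow>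
            (\<exists>\<theta>. is_iso (Zn C n) \<theta> \<and> Dom (Zn C n) \<theta> = Cod (Zn C n) s \<and>
                 Cod (Zn C n) \<theta> = Cod (Zn C n) s' \<and>
                 Cmp (Zn C n) \<theta> s = s' \<and> Cmp (Zn C n) p' \<theta> = p))"
proof -
  obtain k where n: "n = Suc k" using assms(2) by (cases n) auto
  show ?thesis
    unfolding n using degen_factorization_exists[OF assms(1) assms(3)[unfolded n]]
    by (blast intro: degen_factorization_unique[OF assms(1)])
qed

end
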